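(* Let $n\ge 1$ and $d\ge 2$ be integers, and let $\Upsilon$ be the Choi state of an $n$-step process tensor, i.e. a density operator on $\mathcal{H}_{\mathrm{i}_0}\otimes\mathcal{H}_{\mathrm{o}_1}\otimes\cdots\otimes\mathcal{H}_{\mathrm{i}_{n-1}}\otimes\mathcal{H}_{\mathrm{o}_n}$ (every factor of dimension $d$) satisfying the time-ordering trace conditions described in the context. With $\mathrm{M}_j$, $\mathrm{N}$ as in the context and $\overline{\mathrm{M}_j}=2\ln d-\mathrm{M}_j$, for every $1\le k\le n$, $$\mathrm{N}\le 2\sum_{j<k}\overline{\mathrm{M}_j}+\sum_{j>k}\overline{\mathrm{M}_j}.$$
   Context: For $0\le j\le n$ let $\Upsilon_{1:j}$ be the partial trace of $\Upsilon$ over the factors $\mathrm{i}_j,\mathrm{o}_{j+1},\mathrm{i}_{j+1},\dots,\mathrm{i}_{n-1},\mathrm{o}_n$ (so $\Upsilon_{1:n}=\Upsilon$ and $\Upsilon_{1:0}=1$). The time-ordering (and trace-preservation) conditions are: for all $1\le j\le n$, $\mathrm{tr}_{\mathrm{o}_j}[\Upsilon_{1:j}]=\Upsilon_{1:j-1}\otimes \mathbb{I}_{\mathrm{i}_{j-1}}/d$. Entropies are von Neumann entropies with natural logarithm; $S_X$ is the entropy of the reduced state of $\Upsilon$ on the factors $X$; $S_j$ is the entropy of the marginal on $\mathrm{i}_{j-1}\mathrm{o}_j$; $S_{1:n}=S(\Upsilon)$. Define $\mathrm{M}_j=S_{\mathrm{i}_{j-1}}+S_{\mathrm{o}_j}-S_j$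 (Markovian correlation of step $j$) and $\mathrm{N}=\sum_{j=1}^n S_j-S_{1:n}$ (non-Markovian correlation). *)

theory Defs
  imports Complex_Main "Jordan_Normal_Form.Jordan_Normal_Form" "Jordan_Normal_Form.Schur_Decomposition"
begin

(* The Hilbert space has N = 2n factors, each of
   dimension d, numbered 0..N-1 in the order i_0, o_1, i_1, o_2, ..., i_{n-1}, o_n:
   factor 2(j-1) is i_{j-1} and factor 2j-1 is o_j.  A basis index x < d^N of the
   full space is the d-ary number whose p-th most significant digit is the basis
   index in factor p (standard Kronecker ordering). *)

definition digit :: "nat \<Rightarrow> nat \<Rightarrow> nat \<Rightarrow> nat \<Rightarrow> nat" where
  "digit d m p x = (x div d ^ (m - 1 - p)) mod d"

definition enc :: "nat \<Rightarrow> nat \<Rightarrow> (nat \<Rightarrow> nat) \<Rightarrow> nat" where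
  "enc d m f = (\<Sum>p<m. f p * d ^ (m - 1 - p))"

(* digit assignment to all N factors: kept factors S read their digits from a
   (index into the reduced space, factors in increasing order), the traced-out
   factors read theirs from c *)
definition assign :: "nat \<Rightarrow> nat \<Rightarrow> nat set \<Rightarrow> nat \<Rightarrow> nat \<Rightarrow> nat \<Rightarrow> nat" where
  "assign d N S a c = (\<lambda>k.
     let C = {0..<N} - S in
     if k \<in> S then digit d (card S) (card {s \<in> S. s < k}) a
     else digit d (card C) (card {s \<in> C. s < k}) c)"

definition marg :: "nat \<Rightarrow> nat \<Rightarrow> nat set \<Rightarrow> complex mat \<Rightarrow> complex mat" where
  "marg d N S U =
     (let m = card S in
      mat (d ^ m) (d ^ m) (\<lambda>(a, b).
        \<Sum>c < d ^ (N - m). U $$ (enc d N (assign d N S a c), enc d N (assign d N S b c))))"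

definition hermitian :: "complex mat \<Rightarrow> bool" where
  "hermitian A \<longleftrightarrow> mat_adjoint A = A"

definition psd :: "complex mat \<Rightarrow> bool" where
  "psd A \<longleftrightarrow> (\<forall>v \<in> carrier_vec (dim_row A). 0 \<le> Re (conjugate v \<bullet> (A *\<^sub>v v)))"

definition mtrace :: "complex mat \<Rightarrow> complex" where
  "mtrace A = (\<Sum>i<dim_row A. A $$ (i, i))"

definition density_op :: "nat \<Rightarrow> complex mat \<Rightarrow> bool" where
  "density_op D A \<longleftrightarrow> A \<in> carrier_mat D D \<and> hermitian A \<and> psd A \<and> mtrace A = 1"

definition eig_mset :: "complex mat \<Rightarrow> complex multiset" where
  "eig_mset A = (SOME M. char_poly A = (\<Prod>a\<in>#M. [:- a, 1:]))"

(* von Neumann entropy with natural logarithm (note ln 0 = 0, so 0 ln 0 = 0) *)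
definition vN_entropy :: "complex mat \<Rightarrow> real" where
  "vN_entropy A = - (\<Sum>a\<in>#eig_mset A. Re a * ln (Re a))"

(* time-ordering / trace-preservation conditions:
   tr_{o_j}[U_{1:j}] = U_{1:j-1} \<otimes> I_{i_{j-1}}/d, where U_{1:j} = marg on factors {0..<2j}.
   The right-hand side Kronecker product is written out entrywise
   (i_{j-1} = factor 2j-2 is the last, least significant factor). *)
definition time_ordered :: "nat \<Rightarrow> nat \<Rightarrow> complex mat \<Rightarrow> bool" where
  "time_ordered d n U \<longleftrightarrow>
     (\<forall>j \<in> {1..n}. \<forall>a < d ^ (2*j - 1). \<forall>b < d ^ (2*j - 1).
        marg d (2*n) {0..<2*j-1} U $$ (a, b) =
        marg d (2*n) {0..<2*j-2} U $$ (a div d, b div d) *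
          (if a mod d = b mod d then 1 / of_nat d else 0))"

definition process_tensor :: "nat \<Rightarrow> nat \<Rightarrow> complex mat \<Rightarrow> bool" where
  "process_tensor d n U \<longleftrightarrow> density_op (d ^ (2*n)) U \<and> time_ordered d n U"

definition S_in :: "nat \<Rightarrow> nat \<Rightarrow> complex mat \<Rightarrow> nat \<Rightarrow> real" where
  "S_in d n U j = vN_entropy (marg d (2*n) {2*j-2} U)"
definition S_out :: "nat \<Rightarrow> nat \<Rightarrow> complex mat \<Rightarrow> nat \<Rightarrow> real" where
  "S_out d n U j = vN_entropy (marg d (2*n) {2*j-1} U)"
definition S_step :: "nat \<Rightarrow> nat \<Rightarrow> complex mat \<Rightarrow> nat \<Rightarrow> real" where
  "S_step d n U j = vN_entropy (marg d (2*n) {2*j-2, 2*j-1} U)"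

definition Mcorr :: "nat \<Rightarrow> nat \<Rightarrow> complex mat \<Rightarrow> nat \<Rightarrow> real" where
  "Mcorr d n U j = S_in d n U j + S_out d n U j - S_step d n U j"

definition Mbar :: "nat \<Rightarrow> nat \<Rightarrow> complex mat \<Rightarrow> nat \<Rightarrow> real" where
  "Mbar d n U j = 2 * ln (real d) - Mcorr d n U j"

definition Ncorr :: "nat \<Rightarrow> nat \<Rightarrow> complex mat \<Rightarrow> real" where
  "Ncorr d n U = (\<Sum>j=1..n. S_step d n U j) - vN_entropy U"

end

theory Submission
  imports Defs
begin

text \<open>Let \<open>T(m)\<close> (\<open>S_prefix\<close> below) be the entropy of the marginal of \<open>\<Upsilon>\<close> on its first
  \<open>2m\<close> factors (the first \<open>m\<close> steps), so \<open>T(0) = 0\<close> and \<open>T(n) = S(\<Upsilon>)\<close>.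
  Subadditivity gives \<open>T(j) \<le> T(j - 1) + S_j\<close>, hence \<open>T(k - 1) \<le> \<Sum>j<k. S_j\<close>, and the Araki--Lieb inequality gives \<open>S_k \<le> T(k) + T(k - 1)\<close>.
  By time ordering the marginal on the first \<open>2j - 1\<close> factors is \<open>\<Upsilon>_1:j-1 \<otimes> \<one>/d\<close>, with entropy
  \<open>T(j - 1) + ln d\<close>; Araki--Lieb for splitting off the output \<open>o_j\<close> then gives
  \<open>T(j) \<ge> T(j - 1) + ln d - S_o_j\<close>, so \<open>T(n) \<ge> T(k) + (\<Sum>j>k. ln d - S_o_j)\<close>. Inserting these
  bounds into \<open>N = (\<Sum>j. S_j) - T(n)\<close> and using \<open>S_i_j-1, S_o_j \<le> ln d\<close> yields the claim.

  Subadditivity is Klein's inequality evaluated in a product eigenbasis of the two marginals, and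
  Araki--Lieb follows from subadditivity on a purification; both rest on the spectral theorem for
  Hermitian matrices, obtained by deflation.\<close>

section \<open>Spectral theorem for Hermitian matrices\<close>

lemma index_mult_mat_sum:
  assumes "A \<in> carrier_mat n m" "B \<in> carrier_mat m p" "i < n" "j < p"
  shows "(A * B) $$ (i,j) = (\<Sum>k<m. A $$ (i,k) * B $$ (k,j))"
  using assms by (auto simp: scalar_prod_def atLeast0LessThan intro!: sum.cong)

lemma index_mult_mat_vec_sum:
  assumes "A \<in> carrier_mat n m" "v \<in> carrier_vec m" "i < n"
  shows "(A *\<^sub>v v) $ i = (\<Sum>k<m. A $$ (i,k) * v $ k)"
  using assms by (auto simp: scalar_prod_def atLeast0LessThan intro!: sum.cong)

lemma if_one_zero_mult: "(if P then 1 else 0) * (z::'a::semiring_1) = (if P then z else 0)"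
  "z * (if P then 1 else 0) = (if P then z else 0)" by simp_all

lemma cnj_mult_self: "cnj z * z = complex_of_real ((cmod z)\<^sup>2)"
  by (metis complex_norm_square mult.commute)

text \<open>Vectors of \<open>\<complex>\<^sup>n\<close> are functions on \<open>{..<n}\<close>; \<open>v i\<close> is the \<open>i\<close>-th vector of a family.\<close>

definition orthonormal :: "nat \<Rightarrow> nat \<Rightarrow> (nat \<Rightarrow> nat \<Rightarrow> complex) \<Rightarrow> bool" where
  "orthonormal n k v \<longleftrightarrow> (\<forall>i<k. \<forall>j<k. (\<Sum>x<n. cnj (v i x) * v j x) = (if i = j then 1 else 0))"

definition eigenpairs :: "nat \<Rightarrow> nat \<Rightarrow> complex mat \<Rightarrow> (nat \<Rightarrow> nat \<Rightarrow> complex) \<Rightarrow> (nat \<Rightarrow> real) \<Rightarrow> bool" where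
  "eigenpairs n k A v l \<longleftrightarrow> (\<forall>i<k. \<forall>x<n. (\<Sum>y<n. A $$ (x,y) * v i y) = of_real (l i) * v i x)"

definition hermitian_on :: "nat \<Rightarrow> complex mat \<Rightarrow> bool" where
  "hermitian_on n A \<longleftrightarrow> (\<forall>i<n. \<forall>j<n. A $$ (i,j) = cnj (A $$ (j,i)))"

lemma hermitian_onD: "hermitian_on n A \<Longrightarrow> i < n \<Longrightarrow> j < n \<Longrightarrow> A $$ (i,j) = cnj (A $$ (j,i))"
  unfolding hermitian_on_def by blast

lemma orthonormal_mat_inverse:
  assumes "orthonormal n n v"
  defines "V \<equiv> mat n n (\<lambda>(x,i). v i x)" and "W \<equiv> mat n n (\<lambda>(i,x). cnj (v i x))"
  shows "W * V = 1\<^sub>m n" and "V * W = 1\<^sub>m n"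
proof -
  have V: "V \<in> carrier_mat n n" and W: "W \<in> carrier_mat n n" unfolding V_def W_def by auto
  show WV: "W * V = 1\<^sub>m n"
  proof (rule eq_matI)
    fix i j assume "i < dim_row (1\<^sub>m n)" "j < dim_col (1\<^sub>m n)"
    then have ij: "i < n" "j < n" by auto
    show "(W * V) $$ (i, j) = 1\<^sub>m n $$ (i, j)"
      unfolding index_mult_mat_sum[OF W V ij] using assms(1) ij by (simp add: V_def W_def orthonormal_def)
  qed (use V W in auto)
  then show "V * W = 1\<^sub>m n" using mat_mult_left_right_inverse[OF W V] by simp
qed

lemma orthonormal_complete:
  assumes "orthonormal n n v" "x < n" "y < n"
  shows "(\<Sum>i<n. v i x * cnj (v i y)) = (if x = y then 1 else 0)"
proof -
  let ?V = "mat n n (\<lambda>(x,i). v i x)" and ?W = "mat n n (\<lambda>(i,x). cnj (v i x))"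
  have "(?V * ?W) $$ (x,y) = 1\<^sub>m n $$ (x,y)" using orthonormal_mat_inverse(2)[OF assms(1)] by simp
  then show ?thesis using assms(2,3) by (subst (asm) index_mult_mat_sum[of _ n n]) auto
qed

lemma eigenpairs_expansion:
  assumes A: "A \<in> carrier_mat n n" and o: "orthonormal n n v" and e: "eigenpairs n n A v l"
    and xy: "x < n" "y < n"
  shows "A $$ (x,y) = (\<Sum>i<n. of_real (l i) * v i x * cnj (v i y))"
proof -
  have "(\<Sum>i<n. of_real (l i) * v i x * cnj (v i y)) = (\<Sum>i<n. (\<Sum>z<n. A $$ (x,z) * v i z) * cnj (v i y))"
    using e xy by (simp add: eigenpairs_def)
  also have "\<dots> = (\<Sum>z<n. A $$ (x,z) * (\<Sum>i<n. v i z * cnj (v i y)))"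
    unfolding sum_distrib_right sum_distrib_left
    by (subst sum.swap) (simp add: mult.assoc)
  also have "\<dots> = (\<Sum>z<n. A $$ (x,z) * (if z = y then 1 else 0))"
    using orthonormal_complete[OF o] xy by (intro sum.cong) auto
  also have "\<dots> = A $$ (x,y)" using xy by (simp add: if_distrib cong: if_cong)
  finally show ?thesis by simp
qed

lemma proots_prod_linear_factors: "proots (\<Prod>a\<in>#M. [:- a, 1:]) = (M :: complex multiset)"
proof (induction M)
  case (add x M)
  have "(\<Prod>a\<in>#M. [:- a, 1:]) \<noteq> 0" by (auto simp: prod_mset_zero_iff)
  moreover have "proots [:- x, 1:] = {#x#}" using proots_linear_factor[of "- x"] by simp
  ultimately show ?case using add.IH by (simp add: proots_mult del: mult_pCons_left)
qed simp

lemma eig_mset_eigenpairs: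
  assumes A: "A \<in> carrier_mat n n" and o: "orthonormal n n v" and e: "eigenpairs n n A v l"
  shows "eig_mset A = image_mset (\<lambda>i. complex_of_real (l i)) (mset_set {..<n})"
proof -
  define V where "V = mat n n (\<lambda>(x,i). v i x)"
  define W where "W = mat n n (\<lambda>(i,x). cnj (v i x))"
  define D where "D = mat n n (\<lambda>(i,j). if i = j then complex_of_real (l i) else 0)"
  have V: "V \<in> carrier_mat n n" and W: "W \<in> carrier_mat n n" and D: "D \<in> carrier_mat n n"
    unfolding V_def W_def D_def by auto
  have VD: "V * D \<in> carrier_mat n n" using V D by auto
  have AVDW: "A = V * D * W"
  proof (rule eq_matI)
    fix x y assume "x < dim_row (V * D * W)" "y < dim_col (V * D * W)"
    then have xy: "x < n" "y < n" using V W by auto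
    have "(V * D * W) $$ (x,y) = (\<Sum>k<n. (V * D) $$ (x,k) * W $$ (k,y))"
      by (rule index_mult_mat_sum[OF VD W xy])
    also have "\<dots> = (\<Sum>k<n. (\<Sum>i<n. V $$ (x,i) * D $$ (i,k)) * W $$ (k,y))"
      using index_mult_mat_sum[OF V D] xy by (intro sum.cong) auto
    also have "\<dots> = (\<Sum>k<n. of_real (l k) * v k x * cnj (v k y))"
      using xy by (intro sum.cong) (auto simp: V_def D_def W_def if_distrib cong: if_cong)
    finally show "A $$ (x,y) = (V * D * W) $$ (x,y)" using eigenpairs_expansion[OF A o e xy] by simp
  qed (use A V D W in auto)
  have "similar_mat_wit A D V W"
    unfolding similar_mat_wit_def Let_def
    using A V D W AVDW orthonormal_mat_inverse[OF o] by (auto simp: V_def W_def)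
  then have "char_poly A = char_poly D" by (intro char_poly_similar) (auto simp: similar_mat_def)
  also have "\<dots> = (\<Prod>a\<leftarrow>diag_mat D. [:- a, 1:])"
    by (rule char_poly_upper_triangular[OF D]) (auto simp: upper_triangular_def D_def)
  also have "diag_mat D = map (\<lambda>i. complex_of_real (l i)) [0..<n]"
    unfolding diag_mat_def D_def by auto
  finally have cp: "char_poly A = (\<Prod>a\<in>#image_mset (\<lambda>i. complex_of_real (l i)) (mset_set {..<n}). [:- a, 1:])"
    by (simp flip: prod_mset_prod_list add: mset_upt atLeast0LessThan multiset.map_comp)
  then have "char_poly A = (\<Prod>a\<in>#eig_mset A. [:- a, 1:])"
    unfolding eig_mset_def by (rule someI)
  then show ?thesis using cp proots_prod_linear_factors by metis
qed

lemma vN_entropy_eigenpairs: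
  assumes A: "A \<in> carrier_mat n n" and o: "orthonormal n n v" and e: "eigenpairs n n A v l"
  shows "vN_entropy A = - (\<Sum>i<n. l i * ln (l i))"
  unfolding vN_entropy_def eig_mset_eigenpairs[OF A o e]
  by (simp add: sum_unfold_sum_mset multiset.map_comp comp_def)

lemma trace_similar:
  fixes X P Q :: "complex mat"
  assumes X: "X \<in> carrier_mat n n" and P: "P \<in> carrier_mat n n" and Q: "Q \<in> carrier_mat n n"
    and QP: "Q * P = 1\<^sub>m n"
  shows "(\<Sum>i<n. (P * X * Q) $$ (i,i)) = (\<Sum>i<n. X $$ (i,i))"
proof -
  have PX: "P * X \<in> carrier_mat n n" using P X by auto
  have qp: "(\<Sum>i<n. Q $$ (l,i) * P $$ (i,k)) = (if l = k then 1 else 0)" if "l < n" "k < n" for l k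
  proof -
    have "(Q * P) $$ (l,k) = 1\<^sub>m n $$ (l,k)" using QP by simp
    then show ?thesis using index_mult_mat_sum[OF Q P that] that by simp
  qed
  have "(\<Sum>i<n. (P * X * Q) $$ (i,i)) = (\<Sum>i<n. \<Sum>l<n. (\<Sum>k<n. P $$ (i,k) * X $$ (k,l)) * Q $$ (l,i))"
    by (intro sum.cong refl, subst index_mult_mat_sum[OF PX Q], simp_all, intro sum.cong refl, subst index_mult_mat_sum[OF P X], auto)
  also have "\<dots> = (\<Sum>k<n. \<Sum>l<n. X $$ (k,l) * (\<Sum>i<n. Q $$ (l,i) * P $$ (i,k)))"
  proof -
    have "(\<Sum>i<n. \<Sum>l<n. (\<Sum>k<n. P $$ (i,k) * X $$ (k,l)) * Q $$ (l,i))
        = (\<Sum>i<n. \<Sum>l<n. \<Sum>k<n. X $$ (k,l) * (Q $$ (l,i) * P $$ (i,k)))"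
      apply (simp add: sum_distrib_right) apply (intro sum.cong refl) by (simp add: mult_ac)
    also have "\<dots> = (\<Sum>l<n. \<Sum>i<n. \<Sum>k<n. X $$ (k,l) * (Q $$ (l,i) * P $$ (i,k)))"
      by (rule sum.swap)
    also have "\<dots> = (\<Sum>l<n. \<Sum>k<n. \<Sum>i<n. X $$ (k,l) * (Q $$ (l,i) * P $$ (i,k)))"
      by (rule sum.cong[OF refl], rule sum.swap)
    also have "\<dots> = (\<Sum>k<n. \<Sum>l<n. \<Sum>i<n. X $$ (k,l) * (Q $$ (l,i) * P $$ (i,k)))"
      by (rule sum.swap)
    finally show ?thesis by (simp add: sum_distrib_left)
  qed
  also have "\<dots> = (\<Sum>k<n. \<Sum>l<n. X $$ (k,l) * (if l = k then 1 else 0))"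
    using qp by (intro sum.cong refl) auto
  also have "\<dots> = (\<Sum>k<n. X $$ (k,k))"
    by (intro sum.cong refl) (simp add: if_distrib cong: if_cong)
  finally show ?thesis .
qed


lemma trace_square_hermitian_on:
  assumes A: "A \<in> carrier_mat n n" and h: "hermitian_on n A"
  shows "(\<Sum>i<n. (A * A) $$ (i,i)) = of_real (\<Sum>i<n. \<Sum>k<n. (cmod (A $$ (i,k)))\<^sup>2)"
  unfolding of_real_sum
proof (intro sum.cong refl)
  fix i assume i: "i \<in> {..<n}"
  have "(A * A) $$ (i,i) = (\<Sum>k<n. A $$ (i,k) * A $$ (k,i))" using i by (subst index_mult_mat_sum[OF A A]) auto
  also have "\<dots> = (\<Sum>k<n. complex_of_real ((cmod (A $$ (i,k)))\<^sup>2))"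
  proof (intro sum.cong refl)
    fix k assume k: "k \<in> {..<n}"
    have hk: "A $$ (k,i) = cnj (A $$ (i,k))" using hermitian_onD[OF h, of k i] i k by simp
    show "A $$ (i,k) * A $$ (k,i) = complex_of_real ((cmod (A $$ (i,k)))\<^sup>2)"
      by (simp only: hk complex_norm_square)
  qed
  finally show "(A * A) $$ (i,i) = (\<Sum>k<n. complex_of_real ((cmod (A $$ (i,k)))\<^sup>2))" .
qed

text \<open>By Schur decomposition, \<open>A\<close> is similar to a strictly upper triangular matrix, whose square
  has zero trace.\<close>

lemma trace_square_eigenvalues_zero:
  fixes A :: "complex mat"
  assumes A: "A \<in> carrier_mat n n" and ev: "\<And>e. eigenvalue A e \<Longrightarrow> e = 0"
  shows "(\<Sum>i<n. (A * A) $$ (i,i)) = 0"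
proof -
  from char_poly_factorized[OF A] obtain es where cp: "char_poly A = (\<Prod>a\<leftarrow>es. [:- a, 1:])"
    by (elim exE conjE)
  obtain B P Q where sd: "schur_decomposition A es = (B,P,Q)" by (metis prod_cases3)
  from schur_decomposition[OF A cp sd]
  have sim: "similar_mat_wit A B P Q" and ut: "upper_triangular B" and dg: "diag_mat B = es" by auto
  have dA: "dim_row A = n" using A by auto
  from sim have B: "B \<in> carrier_mat n n" and P: "P \<in> carrier_mat n n" and Q: "Q \<in> carrier_mat n n"
    and QP: "Q * P = 1\<^sub>m n"
    unfolding similar_mat_wit_def Let_def dA by auto
  have Bdiag: "B $$ (i,i) = 0" if "i < n" for i
  proof -
    have "B $$ (i,i) \<in> set es" using dg B that unfolding diag_mat_def by auto
    then have "poly (char_poly A) (B $$ (i,i)) = 0" unfolding cp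
      by (induction es) auto
    then show ?thesis using ev eigenvalue_root_char_poly[OF A] by simp
  qed
  have BB: "B * B \<in> carrier_mat n n" using B by auto
  have AA: "A * A = P * (B * B) * Q"
    using similar_mat_wit_pow_id[OF sim, of 2] A B by (simp add: numeral_2_eq_2)
  have "(\<Sum>i<n. (A * A) $$ (i,i)) = (\<Sum>i<n. (B * B) $$ (i,i))"
    unfolding AA by (rule trace_similar[OF BB P Q QP])
  also have "\<dots> = (\<Sum>i<n. \<Sum>k<n. B $$ (i,k) * B $$ (k,i))"
    by (intro sum.cong refl, rule index_mult_mat_sum[OF B B]) auto
  also have "\<dots> = 0"
  proof (intro sum.neutral ballI)
    fix i k assume "i \<in> {..<n}" "k \<in> {..<n}"
    then have ik: "i < n" "k < n" by auto
    show "B $$ (i,k) * B $$ (k,i) = 0"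
    proof (cases "i = k")
      case True then show ?thesis using Bdiag ik by simp
    next
      case False
      then have "k < i \<or> i < k" by arith
      then show ?thesis using ut B ik unfolding upper_triangular_def by auto
    qed
  qed
  finally show ?thesis .
qed

lemma hermitian_on_eigenvalues_zero:
  assumes A: "A \<in> carrier_mat n n" and h: "hermitian_on n A"
    and ev: "\<And>e. eigenvalue A e \<Longrightarrow> e = 0"
    and ij: "i < n" "j < n"
  shows "A $$ (i,j) = 0"
proof -
  have "complex_of_real (\<Sum>i<n. \<Sum>k<n. (cmod (A $$ (i,k)))\<^sup>2) = 0"
    using trace_square_hermitian_on[OF A h] trace_square_eigenvalues_zero[OF A ev] by metis
  then have "(\<Sum>i<n. \<Sum>k<n. (cmod (A $$ (i,k)))\<^sup>2) = 0" by (simp only: of_real_eq_0_iff)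
  then have "\<forall>i\<in>{..<n}. (\<Sum>k<n. (cmod (A $$ (i,k)))\<^sup>2) = 0"
    using sum_nonneg_eq_0_iff[of "{..<n}" "\<lambda>i. \<Sum>k<n. (cmod (A $$ (i,k)))\<^sup>2"]
    by (simp add: sum_nonneg)
  then have "\<forall>k\<in>{..<n}. (cmod (A $$ (i,k)))\<^sup>2 = 0" using ij
    using sum_nonneg_eq_0_iff[of "{..<n}" "\<lambda>k. (cmod (A $$ (i,k)))\<^sup>2"] by simp
  then show ?thesis using ij by simp
qed

lemma sum_cmod_sq_pos:
  fixes x :: "nat \<Rightarrow> complex"
  assumes "\<exists>a<n. x a \<noteq> 0"
  shows "0 < (\<Sum>a<n. (cmod (x a))\<^sup>2)"
proof -
  obtain a where a: "a < n" "x a \<noteq> 0" using assms by blast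
  have "0 < (cmod (x a))\<^sup>2" using a by simp
  also have "\<dots> \<le> (\<Sum>a<n. (cmod (x a))\<^sup>2)" by (rule member_le_sum) (use a in auto)
  finally show ?thesis .
qed

lemma cnj_quadratic_form_hermitian_on:
  assumes h: "hermitian_on n A"
  shows "cnj (\<Sum>a<n. cnj (x a) * (\<Sum>b<n. A $$ (a,b) * x b)) = (\<Sum>a<n. cnj (x a) * (\<Sum>b<n. A $$ (a,b) * x b))"
proof -
  have "cnj (\<Sum>a<n. cnj (x a) * (\<Sum>b<n. A $$ (a,b) * x b)) = (\<Sum>a<n. \<Sum>b<n. x a * cnj (A $$ (a,b)) * cnj (x b))"
    by (simp add: sum_distrib_left mult.assoc)
  also have "\<dots> = (\<Sum>a<n. \<Sum>b<n. x a * A $$ (b,a) * cnj (x b))"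
  proof (intro sum.cong refl)
    fix a b assume "a \<in> {..<n}" "b \<in> {..<n}"
    then have "A $$ (b,a) = cnj (A $$ (a,b))" using hermitian_onD[OF h, of b a] by simp
    then show "x a * cnj (A $$ (a,b)) * cnj (x b) = x a * A $$ (b,a) * cnj (x b)" by simp
  qed
  also have "\<dots> = (\<Sum>b<n. \<Sum>a<n. x a * A $$ (b,a) * cnj (x b))" by (rule sum.swap)
  also have "\<dots> = (\<Sum>a<n. cnj (x a) * (\<Sum>b<n. A $$ (a,b) * x b))"
    by (intro sum.cong refl) (simp add: sum_distrib_left mult_ac)
  finally show ?thesis .
qed

lemma hermitian_on_eigenvalue_real:
  assumes h: "hermitian_on n A" and ev: "\<forall>a<n. (\<Sum>b<n. A $$ (a,b) * x b) = e * x a"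
    and nz: "\<exists>a<n. x a \<noteq> 0"
  shows "Im e = 0"
proof -
  define r where "r = (\<Sum>a<n. (cmod (x a))\<^sup>2)"
  have "(\<Sum>a<n. cnj (x a) * (\<Sum>b<n. A $$ (a,b) * x b)) = (\<Sum>a<n. e * (cnj (x a) * x a))"
    using ev by (intro sum.cong) auto
  also have "\<dots> = e * of_real r" unfolding r_def of_real_sum sum_distrib_left
    by (intro sum.cong refl) (simp only: complex_norm_square mult.commute)
  finally have "cnj e * of_real r = e * of_real r"
    using cnj_quadratic_form_hermitian_on[OF h, of x] by (metis complex_cnj_complex_of_real complex_cnj_mult)
  moreover have "0 < r" unfolding r_def by (rule sum_cmod_sq_pos[OF nz])
  ultimately have "cnj e = e" by simp
  then show ?thesis by (metis cnj.simps(2) complex_cnj_cancel_iff complex_eq_iff neg_equal_zero)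
qed
text \<open>Deflation: \<open>compl_proj k v\<close> is the orthogonal projection onto the complement of the span of
  \<open>v 0, \<dots>, v (k - 1)\<close>; compressing \<open>A\<close> by it yields a Hermitian matrix whose eigenvectors for
  nonzero eigenvalues are new eigenvectors of \<open>A\<close>.\<close>

definition compl_proj :: "nat \<Rightarrow> (nat \<Rightarrow> nat \<Rightarrow> complex) \<Rightarrow> nat \<Rightarrow> nat \<Rightarrow> complex" where
  "compl_proj k v a b = (if a = b then 1 else 0) - (\<Sum>i<k. v i a * cnj (v i b))"

definition compression :: "nat \<Rightarrow> nat \<Rightarrow> (nat \<Rightarrow> nat \<Rightarrow> complex) \<Rightarrow> complex mat \<Rightarrow> complex mat" where
  "compression n k v A =
     mat n n (\<lambda>(a,b). \<Sum>p<n. compl_proj k v a p * (\<Sum>q<n. A $$ (p,q) * compl_proj k v q b))"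

lemma cnj_compl_proj: "cnj (compl_proj k v b a) = compl_proj k v a b"
  unfolding compl_proj_def by (auto simp: mult.commute)

lemma compl_proj_orthogonal:
  assumes o: "orthonormal n k v" and j: "j < k" and b: "b < n"
  shows "(\<Sum>a<n. cnj (v j a) * compl_proj k v a b) = 0"
proof -
  have "(\<Sum>a<n. cnj (v j a) * compl_proj k v a b) = (\<Sum>a<n. cnj (v j a) * (if a = b then 1 else 0))
       - (\<Sum>a<n. \<Sum>i<k. cnj (v j a) * v i a * cnj (v i b))"
    unfolding compl_proj_def by (simp add: right_diff_distrib sum_subtractf sum_distrib_left mult.assoc)
  also have "(\<Sum>a<n. cnj (v j a) * (if a = b then 1 else 0)) = cnj (v j b)"
    using b by (simp add: if_one_zero_mult sum.delta sum.delta')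
  also have "(\<Sum>a<n. \<Sum>i<k. cnj (v j a) * v i a * cnj (v i b)) = (\<Sum>i<k. (\<Sum>a<n. cnj (v j a) * v i a) * cnj (v i b))"
    by (subst sum.swap) (simp add: sum_distrib_right)
  also have "\<dots> = (\<Sum>i<k. if j = i then cnj (v i b) else 0)"
    using o j unfolding orthonormal_def by (intro sum.cong refl) auto
  also have "\<dots> = cnj (v j b)" using j by (simp add: sum.delta)
  finally show ?thesis by simp
qed

lemma compl_proj_fixes_orthogonal:
  assumes orth: "\<forall>j<k. (\<Sum>b<n. cnj (v j b) * y b) = 0" and a: "a < n"
  shows "(\<Sum>b<n. compl_proj k v a b * y b) = y a"
proof -
  have "(\<Sum>b<n. compl_proj k v a b * y b) = (\<Sum>b<n. (if a = b then 1 else 0) * y b) - (\<Sum>b<n. \<Sum>i<k. v i a * (cnj (v i b) * y b))"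
    unfolding compl_proj_def by (simp add: left_diff_distrib sum_subtractf sum_distrib_right mult.assoc)
  also have "(\<Sum>b<n. (if a = b then 1 else 0) * y b) = y a" using a by (simp add: if_one_zero_mult sum.delta sum.delta')
  also have "(\<Sum>b<n. \<Sum>i<k. v i a * (cnj (v i b) * y b)) = (\<Sum>i<k. v i a * (\<Sum>b<n. cnj (v i b) * y b))"
    by (subst sum.swap) (simp add: sum_distrib_left)
  also have "\<dots> = 0" using orth by simp
  finally show ?thesis by simp
qed

lemma trace_compl_proj:
  assumes o: "orthonormal n k v"
  shows "(\<Sum>a<n. compl_proj k v a a) = of_nat n - of_nat k"
proof -
  have "(\<Sum>a<n. compl_proj k v a a) = of_nat n - (\<Sum>a<n. \<Sum>i<k. cnj (v i a) * v i a)"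
    unfolding compl_proj_def by (simp add: sum_subtractf mult.commute)
  also have "(\<Sum>a<n. \<Sum>i<k. cnj (v i a) * v i a) = (\<Sum>i<k. \<Sum>a<n. cnj (v i a) * v i a)" by (rule sum.swap)
  also have "\<dots> = (\<Sum>i<k. 1)" using o unfolding orthonormal_def by (intro sum.cong refl) auto
  finally show ?thesis by simp
qed

lemma hermitian_on_eigenpairs_orthogonal:
  assumes h: "hermitian_on n A" and e: "eigenpairs n k A v l" and j: "j < k"
  shows "(\<Sum>a<n. cnj (v j a) * (\<Sum>b<n. A $$ (a,b) * y b)) = of_real (l j) * (\<Sum>b<n. cnj (v j b) * y b)"
proof -
  have row: "(\<Sum>a<n. cnj (v j a) * A $$ (a,b)) = of_real (l j) * cnj (v j b)" if b: "b < n" for b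
  proof -
    have "(\<Sum>a<n. cnj (v j a) * A $$ (a,b)) = (\<Sum>a<n. cnj (A $$ (b,a) * v j a))"
    proof (intro sum.cong refl)
      fix a assume a: "a \<in> {..<n}"
      have "A $$ (a,b) = cnj (A $$ (b,a))" using hermitian_onD[OF h, of a b] a b by simp
      then show "cnj (v j a) * A $$ (a,b) = cnj (A $$ (b,a) * v j a)" by (simp only: complex_cnj_mult mult.commute)
    qed
    also have "\<dots> = cnj (\<Sum>a<n. A $$ (b,a) * v j a)" by simp
    also have "(\<Sum>a<n. A $$ (b,a) * v j a) = of_real (l j) * v j b" using e j b unfolding eigenpairs_def by blast
    finally show ?thesis by simp
  qed
  have "(\<Sum>a<n. cnj (v j a) * (\<Sum>b<n. A $$ (a,b) * y b)) = (\<Sum>b<n. (\<Sum>a<n. cnj (v j a) * A $$ (a,b)) * y b)"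
    by (simp add: sum_distrib_left sum_distrib_right mult.assoc) (rule sum.swap)
  also have "\<dots> = (\<Sum>b<n. of_real (l j) * cnj (v j b) * y b)"
    using row by (intro sum.cong refl) auto
  finally show ?thesis by (simp add: sum_distrib_left mult.assoc)
qed

lemma compression_index:
  "a < n \<Longrightarrow> b < n \<Longrightarrow> compression n k v A $$ (a,b) = (\<Sum>p<n. compl_proj k v a p * (\<Sum>q<n. A $$ (p,q) * compl_proj k v q b))"
  unfolding compression_def by simp

lemma hermitian_on_compression:
  assumes h: "hermitian_on n A"
  shows "hermitian_on n (compression n k v A)"
  unfolding hermitian_on_def
proof (intro allI impI)
  fix a b assume a: "a < n" and b: "b < n"
  have "cnj (compression n k v A $$ (b,a)) = (\<Sum>p<n. \<Sum>q<n. cnj (compl_proj k v b p) * cnj (A $$ (p,q)) * cnj (compl_proj k v q a))"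
    using a b by (simp add: compression_index sum_distrib_left mult.assoc)
  also have "\<dots> = (\<Sum>p<n. \<Sum>q<n. compl_proj k v a q * A $$ (q,p) * compl_proj k v p b)"
  proof (intro sum.cong refl)
    fix p q assume p: "p \<in> {..<n}" and q: "q \<in> {..<n}"
    have "A $$ (q,p) = cnj (A $$ (p,q))" using hermitian_onD[OF h, of q p] p q by simp
    then show "cnj (compl_proj k v b p) * cnj (A $$ (p,q)) * cnj (compl_proj k v q a) = compl_proj k v a q * A $$ (q,p) * compl_proj k v p b"
      by (simp only: cnj_compl_proj mult.commute mult.left_commute)
  qed
  also have "\<dots> = (\<Sum>q<n. \<Sum>p<n. compl_proj k v a q * A $$ (q,p) * compl_proj k v p b)" by (rule sum.swap)
  also have "\<dots> = compression n k v A $$ (a,b)" using a b by (simp add: compression_index sum_distrib_left mult.assoc)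
  finally show "compression n k v A $$ (a,b) = cnj (compression n k v A $$ (b,a))" by simp
qed

text \<open>\<open>A\<close> maps vectors orthogonal to its eigenvectors \<open>v j\<close> to such vectors, on which the projection
  acts as the identity.\<close>

lemma compressed_eigenvector_imp_eigenvector:
  assumes h: "hermitian_on n A" and e: "eigenpairs n k A v l"
    and orth: "\<forall>j<k. (\<Sum>a<n. cnj (v j a) * x a) = 0"
    and ev: "\<forall>a<n. (\<Sum>p<n. compl_proj k v a p * (\<Sum>q<n. A $$ (p,q) * x q)) = c * x a"
  shows "\<forall>a<n. (\<Sum>b<n. A $$ (a,b) * x b) = c * x a"
proof (intro allI impI)
  fix a assume a: "a < n"
  have "\<forall>j<k. (\<Sum>b<n. cnj (v j b) * (\<Sum>q<n. A $$ (b,q) * x q)) = 0"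
    using hermitian_on_eigenpairs_orthogonal[OF h e] orth by simp
  then have "(\<Sum>p<n. compl_proj k v a p * (\<Sum>q<n. A $$ (p,q) * x q)) = (\<Sum>q<n. A $$ (a,q) * x q)"
    using compl_proj_fixes_orthogonal[where y="\<lambda>p. \<Sum>q<n. A $$ (p,q) * x q"] a by blast
  then show "(\<Sum>b<n. A $$ (a,b) * x b) = c * x a" using ev a by simp
qed

lemma compression_mult:
  assumes a: "a < n"
  shows "(\<Sum>b<n. compression n k v A $$ (a,b) * x b)
    = (\<Sum>p<n. compl_proj k v a p * (\<Sum>q<n. A $$ (p,q) * (\<Sum>b<n. compl_proj k v q b * x b)))"
proof -
  let ?Q = "compl_proj k v"
  have "(\<Sum>b<n. compression n k v A $$ (a,b) * x b) = (\<Sum>b<n. \<Sum>p<n. \<Sum>q<n. ?Q a p * A $$ (p,q) * ?Q q b * x b)"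
    using a by (intro sum.cong refl) (simp add: compression_index sum_distrib_left sum_distrib_right mult.assoc)
  also have "\<dots> = (\<Sum>p<n. \<Sum>q<n. \<Sum>b<n. ?Q a p * A $$ (p,q) * ?Q q b * x b)"
    by (subst sum.swap, rule sum.cong[OF refl], rule sum.swap)
  also have "\<dots> = (\<Sum>p<n. ?Q a p * (\<Sum>q<n. A $$ (p,q) * (\<Sum>b<n. ?Q q b * x b)))"
    by (simp add: sum_distrib_left mult.assoc)
  finally show ?thesis .
qed

lemma eigenvalue_obtain_eigenvector:
  assumes C: "C \<in> carrier_mat n n" and ec: "eigenvalue C c"
  obtains x where "\<exists>a<n. x a \<noteq> 0" "\<And>a. a < n \<Longrightarrow> (\<Sum>b<n. C $$ (a,b) * x b) = c * x a"
proof -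
  obtain xv where xv: "xv \<in> carrier_vec n" "xv \<noteq> 0\<^sub>v n" "C *\<^sub>v xv = c \<cdot>\<^sub>v xv"
    using ec C unfolding eigenvalue_def eigenvector_def by auto
  have "\<exists>a<n. xv $ a \<noteq> 0"
  proof (rule ccontr)
    assume "\<not> ?thesis"
    then have "xv = 0\<^sub>v n" using xv(1) by (intro eq_vecI) auto
    with xv(2) show False by simp
  qed
  moreover have "(\<Sum>b<n. C $$ (a,b) * xv $ b) = c * xv $ a" if a: "a < n" for a
    using arg_cong[OF xv(3), of "\<lambda>w. w $ a"] index_mult_mat_vec_sum[OF C xv(1) a] a xv(1) by simp
  ultimately show ?thesis using that[of "\<lambda>a. xv $ a"] by blast
qed

lemma compression_nonzero_eigenvalue:
  assumes o: "orthonormal n k v" and h: "hermitian_on n A" and e: "eigenpairs n k A v l"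
    and ec: "eigenvalue (compression n k v A) c" and c0: "c \<noteq> 0"
  shows "\<exists>x. (\<exists>a<n. x a \<noteq> 0) \<and> (\<forall>j<k. (\<Sum>a<n. cnj (v j a) * x a) = 0)
     \<and> (\<forall>a<n. (\<Sum>b<n. A $$ (a,b) * x b) = c * x a)"
proof -
  let ?Q = "compl_proj k v"
  have C: "compression n k v A \<in> carrier_mat n n" unfolding compression_def by auto
  obtain x where nz: "\<exists>a<n. x a \<noteq> 0" and Cx: "\<And>a. a < n \<Longrightarrow> (\<Sum>b<n. compression n k v A $$ (a,b) * x b) = c * x a"
    using eigenvalue_obtain_eigenvector[OF C ec] by blast
  define w where "w p = (\<Sum>q<n. A $$ (p,q) * (\<Sum>b<n. ?Q q b * x b))" for p
  have cw: "c * x a = (\<Sum>p<n. ?Q a p * w p)" if "a < n" for a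
    using Cx[OF that] compression_mult[OF that] unfolding w_def by simp
  have orth: "\<forall>j<k. (\<Sum>a<n. cnj (v j a) * x a) = 0"
  proof (intro allI impI)
    fix j assume j: "j < k"
    have "c * (\<Sum>a<n. cnj (v j a) * x a) = (\<Sum>a<n. cnj (v j a) * (c * x a))"
      by (simp add: sum_distrib_left mult_ac)
    also have "\<dots> = (\<Sum>a<n. \<Sum>p<n. cnj (v j a) * ?Q a p * w p)"
      using cw by (intro sum.cong refl) (simp add: sum_distrib_left mult.assoc)
    also have "\<dots> = (\<Sum>p<n. (\<Sum>a<n. cnj (v j a) * ?Q a p) * w p)"
      by (subst sum.swap) (simp add: sum_distrib_right)
    also have "\<dots> = 0" using compl_proj_orthogonal[OF o j] by simp
    finally show "(\<Sum>a<n. cnj (v j a) * x a) = 0" using c0 by simp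
  qed
  have "\<forall>a<n. (\<Sum>p<n. ?Q a p * (\<Sum>q<n. A $$ (p,q) * x q)) = c * x a"
    using cw compl_proj_fixes_orthogonal[OF orth] unfolding w_def by simp
  then show ?thesis using compressed_eigenvector_imp_eigenvector[OF h e orth] nz orth by blast
qed

lemma compression_zero:
  assumes o: "orthonormal n k v" and h: "hermitian_on n A" and e: "eigenpairs n k A v l"
    and kn: "k < n" and C0: "\<And>a b. a < n \<Longrightarrow> b < n \<Longrightarrow> compression n k v A $$ (a,b) = 0"
  shows "\<exists>x. (\<exists>a<n. x a \<noteq> 0) \<and> (\<forall>j<k. (\<Sum>a<n. cnj (v j a) * x a) = 0)
     \<and> (\<forall>a<n. (\<Sum>b<n. A $$ (a,b) * x b) = 0 * x a)"
proof -
  have "\<exists>b0<n. \<exists>a<n. compl_proj k v a b0 \<noteq> 0"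
  proof (rule ccontr)
    assume "\<not> ?thesis"
    then have "(\<Sum>a<n. compl_proj k v a a) = 0" by (intro sum.neutral) blast
    then have "(of_nat n :: complex) = of_nat k" using trace_compl_proj[OF o] by simp
    then show False using kn by (simp only: of_nat_eq_iff)
  qed
  then obtain b0 where b0: "b0 < n" "\<exists>a<n. compl_proj k v a b0 \<noteq> 0" by blast
  define x where "x a = compl_proj k v a b0" for a
  have nz: "\<exists>a<n. x a \<noteq> 0" using b0(2) unfolding x_def .
  have orth: "\<forall>j<k. (\<Sum>a<n. cnj (v j a) * x a) = 0"
    unfolding x_def using compl_proj_orthogonal[OF o _ b0(1)] by blast
  have "\<forall>a<n. (\<Sum>p<n. compl_proj k v a p * (\<Sum>q<n. A $$ (p,q) * x q)) = 0 * x a"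
  proof (intro allI impI)
    fix a assume a: "a < n"
    have "(\<Sum>p<n. compl_proj k v a p * (\<Sum>q<n. A $$ (p,q) * x q)) = compression n k v A $$ (a,b0)"
      unfolding x_def by (rule compression_index[OF a b0(1), symmetric])
    then show "(\<Sum>p<n. compl_proj k v a p * (\<Sum>q<n. A $$ (p,q) * x q)) = 0 * x a"
      using C0[OF a b0(1)] by simp
  qed
  with compressed_eigenvector_imp_eigenvector[OF h e orth] nz orth show ?thesis by blast
qed

lemma hermitian_on_orthogonal_eigenvector:
  assumes A: "A \<in> carrier_mat n n" and h: "hermitian_on n A"
    and o: "orthonormal n k v" and e: "eigenpairs n k A v l" and kn: "k < n"
  shows "\<exists>x c. (\<exists>a<n. x a \<noteq> 0) \<and> (\<forall>j<k. (\<Sum>a<n. cnj (v j a) * x a) = 0)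
     \<and> (\<forall>a<n. (\<Sum>b<n. A $$ (a,b) * x b) = c * x a)"
proof (cases "\<exists>c. eigenvalue (compression n k v A) c \<and> c \<noteq> 0")
  case True
  then obtain c where "eigenvalue (compression n k v A) c" "c \<noteq> 0" by blast
  from compression_nonzero_eigenvalue[OF o h e this] show ?thesis by blast
next
  case False
  have C: "compression n k v A \<in> carrier_mat n n" unfolding compression_def by simp
  have "compression n k v A $$ (a,b) = 0" if "a < n" "b < n" for a b
    by (rule hermitian_on_eigenvalues_zero[OF C hermitian_on_compression[OF h] _ that]) (use False in blast)
  from compression_zero[OF o h e kn this] show ?thesis by blast
qed

lemma orthonormal_extend:
  assumes o: "orthonormal n k v" and orth: "\<forall>j<k. (\<Sum>a<n. cnj (v j a) * x a) = 0"
    and unit: "(\<Sum>a<n. cnj (x a) * x a) = 1"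
  shows "orthonormal n (Suc k) (v(k := x))"
  unfolding orthonormal_def
proof (intro allI impI)
  fix i j assume i: "i < Suc k" and j: "j < Suc k"
  have orth': "(\<Sum>a<n. cnj (x a) * v j a) = 0" if "j < k" for j
  proof -
    have "(\<Sum>a<n. cnj (x a) * v j a) = cnj (\<Sum>a<n. cnj (v j a) * x a)" by (simp add: mult.commute)
    then show ?thesis using orth that by simp
  qed
  show "(\<Sum>a<n. cnj ((v(k := x)) i a) * (v(k := x)) j a) = (if i = j then 1 else 0)"
    using i j o orth orth' unit unfolding orthonormal_def
    by (cases "i = k"; cases "j = k") auto
qed

lemma eigenpairs_extend:
  assumes "eigenpairs n k A v l" and "\<forall>a<n. (\<Sum>b<n. A $$ (a,b) * x b) = of_real c * x a"
  shows "eigenpairs n (Suc k) A (v(k := x)) (l(k := c))"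
  using assms unfolding eigenpairs_def by (auto simp: less_Suc_eq)

lemma normalize_nonzero:
  fixes x :: "nat \<Rightarrow> complex"
  assumes nz: "\<exists>a<n. x a \<noteq> 0"
  obtains s where "s > 0" "(\<Sum>a<n. cnj (x a / of_real s) * (x a / of_real s)) = 1"
proof -
  define r where "r = (\<Sum>a<n. (cmod (x a))\<^sup>2)"
  have rpos: "r > 0" unfolding r_def by (rule sum_cmod_sq_pos[OF nz])
  have "(\<Sum>a<n. cnj (x a / of_real (sqrt r)) * (x a / of_real (sqrt r))) = (\<Sum>a<n. of_real ((cmod (x a))\<^sup>2) / of_real r)"
  proof (intro sum.cong refl)
    fix a
    have sq: "complex_of_real (sqrt r) * complex_of_real (sqrt r) = of_real r"
      using rpos by (simp flip: of_real_mult)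
    have "cnj (x a / of_real (sqrt r)) * (x a / of_real (sqrt r))
        = (cnj (x a) * x a) / (complex_of_real (sqrt r) * complex_of_real (sqrt r))"
      by simp
    then show "cnj (x a / of_real (sqrt r)) * (x a / of_real (sqrt r)) = of_real ((cmod (x a))\<^sup>2) / of_real r"
      unfolding sq by (simp only: cnj_mult_self)
  qed
  also have "\<dots> = of_real r / of_real r" unfolding r_def of_real_sum sum_divide_distrib ..
  also have "\<dots> = 1" using rpos by simp
  finally show ?thesis using that[of "sqrt r"] rpos by simp
qed

lemma orthonormal_eigenpairs_extend:
  assumes A: "A \<in> carrier_mat n n" and h: "hermitian_on n A"
    and o: "orthonormal n k v" and e: "eigenpairs n k A v l" and kn: "k < n"
  shows "\<exists>v' l'. orthonormal n (Suc k) v' \<and> eigenpairs n (Suc k) A v' l'"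
proof -
  obtain x c where nz: "\<exists>a<n. x a \<noteq> 0" and orth: "\<forall>j<k. (\<Sum>a<n. cnj (v j a) * x a) = 0"
    and ev: "\<forall>a<n. (\<Sum>b<n. A $$ (a,b) * x b) = c * x a"
    using hermitian_on_orthogonal_eigenvector[OF A h o e kn] by blast
  have "Im c = 0" by (rule hermitian_on_eigenvalue_real[OF h ev nz])
  then have cre: "c = of_real (Re c)" by (simp add: complex_eq_iff)
  obtain s where spos: "s > 0" and unit: "(\<Sum>a<n. cnj (x a / of_real s) * (x a / of_real s)) = 1"
    using normalize_nonzero[OF nz] by blast
  define x' where "x' a = x a / of_real s" for a
  have "(\<Sum>a<n. cnj (v j a) * x' a) = 0" if "j < k" for j
  proof -
    have "(\<Sum>a<n. cnj (v j a) * x' a) = (\<Sum>a<n. cnj (v j a) * x a) / of_real s"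
      unfolding x'_def by (simp add: sum_divide_distrib)
    then show ?thesis using orth that by simp
  qed
  moreover have "(\<Sum>b<n. A $$ (a,b) * x' b) = of_real (Re c) * x' a" if a: "a < n" for a
  proof -
    have "(\<Sum>b<n. A $$ (a,b) * x' b) = (\<Sum>b<n. A $$ (a,b) * x b) / of_real s"
      unfolding x'_def by (simp add: sum_divide_distrib)
    also have "\<dots> = c * x a / of_real s" using ev a by simp
    finally show ?thesis unfolding x'_def using cre by simp
  qed
  ultimately show ?thesis
    using orthonormal_extend[OF o, of x'] eigenpairs_extend[OF e, of x' "Re c"] unit unfolding x'_def by blast
qed

lemma hermitian_on_spectral:
  assumes A: "A \<in> carrier_mat n n" and h: "hermitian_on n A"
  shows "\<exists>v l. orthonormal n n v \<and> eigenpairs n n A v l"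
proof -
  have "\<exists>v l. orthonormal n k v \<and> eigenpairs n k A v l" if "k \<le> n" for k
    using that
  proof (induction k)
    case 0
    show ?case unfolding orthonormal_def eigenpairs_def by simp
  next
    case (Suc k)
    then obtain v l where "orthonormal n k v" "eigenpairs n k A v l" by auto
    then show ?case using orthonormal_eigenpairs_extend[OF A h] Suc.prems by simp
  qed
  then show ?thesis by simp
qed

lemma index_mat_adjoint:
  assumes "A \<in> carrier_mat n n" "i < n" "j < n"
  shows "mat_adjoint A $$ (i,j) = cnj (A $$ (j,i))"
  using assms unfolding mat_adjoint_def by (simp add: mat_of_rows_def cols_def)

lemma hermitian_iff_hermitian_on:
  assumes A: "A \<in> carrier_mat n n"
  shows "hermitian A \<longleftrightarrow> hermitian_on n A"
proof
  assume h: "hermitian A"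
  show "hermitian_on n A"
    unfolding hermitian_on_def
  proof (intro allI impI)
    fix i j assume ij: "i < n" "j < n"
    have "A $$ (i,j) = mat_adjoint A $$ (i,j)" using h unfolding hermitian_def by simp
    then show "A $$ (i,j) = cnj (A $$ (j,i))" using index_mat_adjoint[OF A ij] by simp
  qed
next
  assume h: "hermitian_on n A"
  show "hermitian A"
    unfolding hermitian_def
  proof (rule eq_matI)
    fix i j assume "i < dim_row A" "j < dim_col A"
    then have ij: "i < n" "j < n" using A by auto
    show "mat_adjoint A $$ (i,j) = A $$ (i,j)"
      using index_mat_adjoint[OF A ij] hermitian_onD[OF h ij] by simp
  qed (use A in \<open>auto simp: mat_adjoint_def\<close>)
qed

lemma conjugate_scalar_prod_mult_mat_vec:
  assumes "A \<in> carrier_mat n n" "v \<in> carrier_vec n"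
  shows "conjugate v \<bullet> (A *\<^sub>v v) = (\<Sum>a<n. cnj (v $ a) * (\<Sum>b<n. A $$ (a,b) * v $ b))"
  using assms by (auto simp: scalar_prod_def atLeast0LessThan index_mult_mat_vec_sum intro!: sum.cong)

lemma psdI:
  assumes A: "A \<in> carrier_mat n n"
    and f: "\<And>x. 0 \<le> Re (\<Sum>a<n. cnj (x a) * (\<Sum>b<n. A $$ (a,b) * x b))"
  shows "psd A"
  unfolding psd_def
proof (intro ballI)
  fix v :: "complex vec" assume "v \<in> carrier_vec (dim_row A)"
  then have v: "v \<in> carrier_vec n" using A by auto
  show "0 \<le> Re (conjugate v \<bullet> (A *\<^sub>v v))"
    unfolding conjugate_scalar_prod_mult_mat_vec[OF A v] using f[of "\<lambda>a. v $ a"] .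
qed

lemma psdD:
  assumes A: "A \<in> carrier_mat n n" and p: "psd A"
  shows "0 \<le> Re (\<Sum>a<n. cnj (x a) * (\<Sum>b<n. A $$ (a,b) * x b))"
proof -
  have v: "vec n x \<in> carrier_vec n" by simp
  have "0 \<le> Re (conjugate (vec n x) \<bullet> (A *\<^sub>v vec n x))" using p A v unfolding psd_def by auto
  then show ?thesis unfolding conjugate_scalar_prod_mult_mat_vec[OF A v] by simp
qed

lemma density_op_spectral:
  assumes d: "density_op n A"
  obtains v l where "orthonormal n n v" "eigenpairs n n A v l" "\<forall>i<n. 0 \<le> l i" "(\<Sum>i<n. l i) = 1"
    "vN_entropy A = - (\<Sum>i<n. l i * ln (l i))"
proof -
  have A: "A \<in> carrier_mat n n" and hA: "hermitian A" and p: "psd A" and tr: "mtrace A = 1"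
    using d unfolding density_op_def by auto
  obtain v l where o: "orthonormal n n v" and e: "eigenpairs n n A v l"
    using hermitian_on_spectral[OF A] hA hermitian_iff_hermitian_on[OF A] by blast
  have nn: "0 \<le> l i" if i: "i < n" for i
  proof -
    have "(\<Sum>a<n. cnj (v i a) * (\<Sum>b<n. A $$ (a,b) * v i b)) = (\<Sum>a<n. of_real (l i) * (cnj (v i a) * v i a))"
      using e i unfolding eigenpairs_def by (intro sum.cong refl) (simp add: mult_ac)
    also have "\<dots> = of_real (l i)" using o i unfolding orthonormal_def by (simp add: sum_distrib_left[symmetric])
    finally show ?thesis using psdD[OF A p, of "v i"] by simp
  qed
  have "(\<Sum>i<n. complex_of_real (l i)) = (\<Sum>i<n. of_real (l i) * (\<Sum>x<n. cnj (v i x) * v i x))"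
    using o unfolding orthonormal_def by simp
  also have "\<dots> = (\<Sum>x<n. \<Sum>i<n. of_real (l i) * v i x * cnj (v i x))"
    by (subst sum.swap) (simp add: sum_distrib_left mult_ac)
  also have "\<dots> = (\<Sum>x<n. A $$ (x,x))" using eigenpairs_expansion[OF A o e] by simp
  also have "\<dots> = 1" using tr A unfolding mtrace_def by simp
  finally have "(\<Sum>i<n. l i) = 1" by (metis of_real_eq_1_iff of_real_sum)
  then show ?thesis using that o e nn vN_entropy_eigenpairs[OF A o e] by blast
qed

section \<open>Partial traces\<close>

lemma mult_add_less_mult:
  assumes "i < (M::nat)" "j < K"
  shows "i * K + j < M * K"
proof -
  have "i * K + j < i * K + K" using assms by simp
  also have "\<dots> = (i+1) * K" by simp
  also have "\<dots> \<le> M * K" using assms by (intro mult_right_mono) auto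
  finally show ?thesis .
qed

lemma sum_lessThan_mult:
  fixes f :: "nat \<Rightarrow> 'a::comm_monoid_add"
  shows "(\<Sum>t<M*K. f t) = (\<Sum>i<M. \<Sum>j<K. f (i*K + j))"
proof -
  have "(\<Sum>j<K. f (i*K + j)) = sum f {i*K..<i*K+K}" for i
    using sum.shift_bounds_nat_ivl[of f 0 "i*K" K] by (simp add: atLeast0LessThan add.commute)
  then show ?thesis by (simp add: sum.nat_group)
qed

lemma mult_add_less_mult3:
  assumes "x < E" "a < D" "z < (F::nat)"
  shows "x * (D*F) + a * F + z < E * D * F"
proof -
  have "a * F + z < D * F" using mult_add_less_mult assms by blast
  then have "x * (D*F) + (a * F + z) < E * (D * F)" using mult_add_less_mult assms by blast
  then show ?thesis by (simp add: add.assoc mult.assoc)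
qed

lemma sum_lessThan_mult3:
  fixes f :: "nat \<Rightarrow> 'a::comm_monoid_add"
  shows "(\<Sum>t<E*D*F. f t) = (\<Sum>x<E. \<Sum>a<D. \<Sum>z<F. f (x*(D*F) + a*F + z))"
proof -
  have "(\<Sum>t<E*D*F. f t) = (\<Sum>t<E*(D*F). f t)" by (simp add: mult.assoc)
  also have "\<dots> = (\<Sum>x<E. \<Sum>s<D*F. f (x*(D*F) + s))" by (rule sum_lessThan_mult)
  also have "\<dots> = (\<Sum>x<E. \<Sum>a<D. \<Sum>z<F. f (x*(D*F) + (a*F + z)))"
    by (rule sum.cong[OF refl], rule sum_lessThan_mult)
  finally show ?thesis by (simp add: add.assoc)
qed

lemma mult_add3_div_mod:
  assumes "a < D" "z < (F::nat)"
  shows "(x * (D*F) + a * F + z) div (D*F) = x"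
    and "(x * (D*F) + a * F + z) mod (D*F) div F = a"
    and "(x * (D*F) + a * F + z) mod F = z"
proof -
  have az: "a * F + z < D * F" using mult_add_less_mult assms by blast
  have m: "D * F \<noteq> 0" using assms by auto
  have e: "x * (D*F) + a * F + z = (a * F + z) + x * (D*F)" by simp
  show "(x * (D*F) + a * F + z) div (D*F) = x" unfolding e using az m by simp
  have "(x * (D*F) + a * F + z) mod (D*F) = a * F + z" unfolding e using az m by simp
  then show "(x * (D*F) + a * F + z) mod (D*F) div F = a" using assms by simp
  have "x * (D*F) + a * F + z = (x * D + a) * F + z" by (simp add: algebra_simps)
  then show "(x * (D*F) + a * F + z) mod F = z" using assms by simp
qed


text \<open>\<open>partial_trace E D F U\<close> is the reduced state on the middle factor of
  \<open>\<complex>\<^sup>E \<otimes> \<complex>\<^sup>D \<otimes> \<complex>\<^sup>F\<close>; index \<open>x * (D * F) + a * F + z\<close> stands for \<open>|x\<rangle> \<otimes> |a\<rangle> \<otimes> |z\<rangle>\<close>.\<close>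

definition partial_trace :: "nat \<Rightarrow> nat \<Rightarrow> nat \<Rightarrow> complex mat \<Rightarrow> complex mat" where
  "partial_trace E D F U = mat D D (\<lambda>(a,b). \<Sum>x<E. \<Sum>z<F. U $$ (x*(D*F) + a*F + z, x*(D*F) + b*F + z))"

lemma partial_trace_carrier[simp]: "partial_trace E D F U \<in> carrier_mat D D"
  unfolding partial_trace_def by simp

lemma partial_trace_dim[simp]: "dim_row (partial_trace E D F U) = D" "dim_col (partial_trace E D F U) = D"
  unfolding partial_trace_def by simp_all

lemma partial_trace_index:
  "a < D \<Longrightarrow> b < D \<Longrightarrow> partial_trace E D F U $$ (a,b) = (\<Sum>x<E. \<Sum>z<F. U $$ (x*(D*F) + a*F + z, x*(D*F) + b*F + z))"
  unfolding partial_trace_def by simp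

lemma sum_embed_middle:
  fixes g y :: "nat \<Rightarrow> complex"
  assumes x: "x < E" and z: "z < F"
  shows "(\<Sum>t<E*D*F. g t * (if t div (D*F) = x \<and> t mod F = z then y (t mod (D*F) div F) else 0))
       = (\<Sum>b<D. g (x*(D*F) + b*F + z) * y b)"
proof -
  let ?w = "\<lambda>t. if t div (D*F) = x \<and> t mod F = z then y (t mod (D*F) div F) else 0"
  have "(\<Sum>t<E*D*F. g t * ?w t) = (\<Sum>x'<E. \<Sum>b<D. \<Sum>z'<F. g (x'*(D*F) + b*F + z') * ?w (x'*(D*F) + b*F + z'))"
    by (rule sum_lessThan_mult3)
  also have "\<dots> = (\<Sum>x'<E. \<Sum>b<D. \<Sum>z'<F. if x' = x then (if z' = z then g (x*(D*F) + b*F + z) * y b else 0) else 0)"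
  proof (intro sum.cong refl)
    fix x' b z' assume "x' \<in> {..<E}" "b \<in> {..<D}" "z' \<in> {..<F}"
    then have b: "b < D" and z': "z' < F" by auto
    show "g (x'*(D*F) + b*F + z') * ?w (x'*(D*F) + b*F + z') = (if x' = x then (if z' = z then g (x*(D*F) + b*F + z) * y b else 0) else 0)"
      using mult_add3_div_mod[OF b z', of x'] by auto
  qed
  also have "\<dots> = (\<Sum>x'<E. if x' = x then (\<Sum>b<D. g (x*(D*F) + b*F + z) * y b) else 0)"
    using z by (intro sum.cong refl) (simp add: sum.delta')
  also have "\<dots> = (\<Sum>b<D. g (x*(D*F) + b*F + z) * y b)" using x by (simp add: sum.delta')
  finally show ?thesis .
qed


lemma hermitian_on_partial_trace:
  assumes hU: "hermitian_on (E*D*F) U"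
  shows "hermitian_on D (partial_trace E D F U)"
  unfolding hermitian_on_def
proof (intro allI impI)
  fix a b assume a: "a < D" and b: "b < D"
  have "cnj (partial_trace E D F U $$ (b,a)) = (\<Sum>x<E. \<Sum>z<F. cnj (U $$ (x*(D*F) + b*F + z, x*(D*F) + a*F + z)))"
    using a b by (simp add: partial_trace_index)
  also have "\<dots> = (\<Sum>x<E. \<Sum>z<F. U $$ (x*(D*F) + a*F + z, x*(D*F) + b*F + z))"
  proof (intro sum.cong refl)
    fix x z assume "x \<in> {..<E}" "z \<in> {..<F}"
    then have i1: "x*(D*F) + a*F + z < E*D*F" and i2: "x*(D*F) + b*F + z < E*D*F"
      using mult_add_less_mult3 a b by auto
    show "cnj (U $$ (x*(D*F) + b*F + z, x*(D*F) + a*F + z)) = U $$ (x*(D*F) + a*F + z, x*(D*F) + b*F + z)"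
      using hermitian_onD[OF hU i1 i2] by simp
  qed
  also have "\<dots> = partial_trace E D F U $$ (a,b)" using a b by (simp add: partial_trace_index)
  finally show "partial_trace E D F U $$ (a,b) = cnj (partial_trace E D F U $$ (b,a))" by simp
qed

text \<open>The quadratic form of the reduced state at \<open>y\<close> is the sum of the quadratic forms of \<open>U\<close>
  at the vectors \<open>|x\<rangle> \<otimes> y \<otimes> |z\<rangle>\<close>.\<close>

lemma psd_partial_trace:
  assumes U: "U \<in> carrier_mat (E*D*F) (E*D*F)" and pU: "psd U"
  shows "psd (partial_trace E D F U)"
proof (rule psdI[OF partial_trace_carrier])
  fix y :: "nat \<Rightarrow> complex"
  let ?N = "E*D*F"
  define Q where "Q x z = (\<Sum>a<D. cnj (y a) * (\<Sum>b<D. U $$ (x*(D*F) + a*F + z, x*(D*F) + b*F + z) * y b))" for x z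
  have Qnn: "0 \<le> Re (Q x z)" if x: "x < E" and z: "z < F" for x z
  proof -
    define w where "w t = (if t div (D*F) = x \<and> t mod F = z then y (t mod (D*F) div F) else 0)" for t
    define wc where "wc t = (if t div (D*F) = x \<and> t mod F = z then cnj (y (t mod (D*F) div F)) else 0)" for t
    have inner: "(\<Sum>s<?N. U $$ (t,s) * w s) = (\<Sum>b<D. U $$ (t, x*(D*F) + b*F + z) * y b)" for t
      unfolding w_def by (rule sum_embed_middle[OF x z])
    have "(\<Sum>t<?N. cnj (w t) * (\<Sum>s<?N. U $$ (t,s) * w s)) = (\<Sum>t<?N. (\<Sum>b<D. U $$ (t, x*(D*F) + b*F + z) * y b) * wc t)"
      unfolding inner by (intro sum.cong refl) (simp add: w_def wc_def)
    also have "\<dots> = (\<Sum>a<D. (\<Sum>b<D. U $$ (x*(D*F) + a*F + z, x*(D*F) + b*F + z) * y b) * cnj (y a))"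
      unfolding wc_def by (rule sum_embed_middle[OF x z])
    also have "\<dots> = Q x z" unfolding Q_def by (simp add: mult.commute)
    finally show ?thesis using psdD[OF U pU, of w] by simp
  qed
  have "(\<Sum>a<D. cnj (y a) * (\<Sum>b<D. partial_trace E D F U $$ (a,b) * y b))
      = (\<Sum>a<D. \<Sum>b<D. \<Sum>x<E. \<Sum>z<F. cnj (y a) * (U $$ (x*(D*F) + a*F + z, x*(D*F) + b*F + z) * y b))"
    by (intro sum.cong refl) (simp add: partial_trace_index sum_distrib_left sum_distrib_right)
  also have "\<dots> = (\<Sum>x<E. \<Sum>z<F. \<Sum>a<D. \<Sum>b<D. cnj (y a) * (U $$ (x*(D*F) + a*F + z, x*(D*F) + b*F + z) * y b))"
    by (subst sum.swap, subst (2) sum.swap, subst sum.swap) (simp add: sum.swap[of _ "{..<D}" "{..<F}"])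
  also have "\<dots> = (\<Sum>x<E. \<Sum>z<F. Q x z)" unfolding Q_def by (simp add: sum_distrib_left)
  finally have "Re (\<Sum>a<D. cnj (y a) * (\<Sum>b<D. partial_trace E D F U $$ (a,b) * y b)) = (\<Sum>x<E. \<Sum>z<F. Re (Q x z))"
    by simp
  also have "\<dots> \<ge> 0" using Qnn by (intro sum_nonneg) auto
  finally show "0 \<le> Re (\<Sum>a<D. cnj (y a) * (\<Sum>b<D. partial_trace E D F U $$ (a,b) * y b))" .
qed

lemma mtrace_partial_trace:
  assumes U: "U \<in> carrier_mat (E*D*F) (E*D*F)"
  shows "mtrace (partial_trace E D F U) = mtrace U"
proof -
  have "mtrace (partial_trace E D F U) = (\<Sum>a<D. \<Sum>x<E. \<Sum>z<F. U $$ (x*(D*F) + a*F + z, x*(D*F) + a*F + z))"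
    unfolding mtrace_def by (simp add: partial_trace_index)
  also have "\<dots> = (\<Sum>x<E. \<Sum>a<D. \<Sum>z<F. U $$ (x*(D*F) + a*F + z, x*(D*F) + a*F + z))"
    by (rule sum.swap)
  also have "\<dots> = mtrace U" using U unfolding mtrace_def by (simp add: sum_lessThan_mult3)
  finally show ?thesis .
qed

lemma density_op_partial_trace:
  assumes "density_op (E*D*F) U"
  shows "density_op D (partial_trace E D F U)"
  using assms hermitian_on_partial_trace psd_partial_trace mtrace_partial_trace
    hermitian_iff_hermitian_on[of U] hermitian_iff_hermitian_on[OF partial_trace_carrier]
  unfolding density_op_def by auto

lemma sum_lessThan_add:
  fixes f :: "nat \<Rightarrow> 'a::comm_monoid_add"
  shows "(\<Sum>i<m+n. f i) = (\<Sum>i<m. f i) + (\<Sum>i<n. f (m+i))"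
  by (induction n) (simp_all add: add.assoc)

lemma enc_add:
  "enc d (m1 + m2) f = enc d m1 f * d ^ m2 + enc d m2 (\<lambda>k. f (m1 + k))"
proof -
  have "enc d (m1 + m2) f = (\<Sum>p<m1. f p * d ^ (m1 + m2 - 1 - p)) + (\<Sum>k<m2. f (m1 + k) * d ^ (m1 + m2 - 1 - (m1 + k)))"
    unfolding enc_def by (rule sum_lessThan_add)
  also have "(\<Sum>p<m1. f p * d ^ (m1 + m2 - 1 - p)) = (\<Sum>p<m1. f p * d ^ (m1 - 1 - p)) * d ^ m2"
    unfolding sum_distrib_right
  proof (intro sum.cong refl)
    fix p assume "p \<in> {..<m1}"
    then have "m1 + m2 - 1 - p = (m1 - 1 - p) + m2" by auto
    then show "f p * d ^ (m1 + m2 - 1 - p) = f p * d ^ (m1 - 1 - p) * d ^ m2" by (simp add: power_add)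
  qed
  also have "(\<Sum>k<m2. f (m1 + k) * d ^ (m1 + m2 - 1 - (m1 + k))) = enc d m2 (\<lambda>k. f (m1 + k))"
    unfolding enc_def by (intro sum.cong refl) auto
  finally show ?thesis unfolding enc_def by simp
qed

lemma enc_Suc: "enc d (Suc m) f = enc d m f * d + f m"
  using enc_add[of d m 1 f] by (simp add: enc_def)

lemma enc_cong: "(\<And>p. p < m \<Longrightarrow> f p = g p) \<Longrightarrow> enc d m f = enc d m g"
  unfolding enc_def by (intro sum.cong refl) auto

lemma enc_digit:
  assumes "x < d ^ m" "d > 0"
  shows "enc d m (\<lambda>p. digit d m p x) = x"
  using assms(1)
proof (induction m arbitrary: x)
  case 0
  then show ?case by (simp add: enc_def)
next
  case (Suc m)
  have "enc d (Suc m) (\<lambda>p. digit d (Suc m) p x) = enc d m (\<lambda>p. digit d (Suc m) p x) * d + digit d (Suc m) m x"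
    by (rule enc_Suc)
  also have "enc d m (\<lambda>p. digit d (Suc m) p x) = enc d m (\<lambda>p. digit d m p (x div d))"
  proof (rule enc_cong)
    fix p assume p: "p < m"
    have "Suc m - 1 - p = Suc (m - 1 - p)" using p by auto
    then show "digit d (Suc m) p x = digit d m p (x div d)"
      unfolding digit_def by (simp add: div_mult2_eq)
  qed
  also have "\<dots> = x div d"
  proof (rule Suc.IH)
    show "x div d < d ^ m" using Suc.prems assms(2) by (simp add: div_less_iff_less_mult mult.commute)
  qed
  also have "digit d (Suc m) m x = x mod d" unfolding digit_def by simp
  finally show ?case by simp
qed

lemma digit_high:
  assumes "k < p"
  shows "digit d (p + r) k c = digit d p k (c div d ^ r)"
proof -
  have "p + r - 1 - k = r + (p - 1 - k)" using assms by auto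
  then show ?thesis unfolding digit_def by (simp add: div_mult2_eq power_add)
qed

lemma mod_mult_div: "(c::nat) mod (b * q) div b = c div b mod q"
proof (cases "b = 0")
  case True then show ?thesis by simp
next
  case False
  have "c mod (b * q) = b * (c div b mod q) + c mod b" by (rule mod_mult2_eq)
  then show ?thesis using False by simp
qed

lemma digit_low:
  assumes "t < r"
  shows "digit d (p + r) (p + t) c = digit d r t (c mod d ^ r)"
proof -
  define s where "s = r - 1 - t"
  have e1: "p + r - 1 - (p + t) = s" unfolding s_def using assms by auto
  have e2: "r = s + Suc t" unfolding s_def using assms by auto
  have "(c mod d ^ r) div d ^ s = c div d ^ s mod d ^ Suc t"
    unfolding e2 power_add by (rule mod_mult_div)
  then have "(c mod d ^ r) div d ^ s mod d = c div d ^ s mod d"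
    by (simp add: mod_mod_cancel)
  then show ?thesis unfolding digit_def e1 s_def[symmetric] by simp
qed


lemma assign_interval:
  assumes N: "N = p + q + r"
  shows "k < p \<Longrightarrow> assign d N {p..<p+q} a c k = digit d (p + r) k c"
    and "t < q \<Longrightarrow> assign d N {p..<p+q} a c (p + t) = digit d q t a"
    and "t < r \<Longrightarrow> assign d N {p..<p+q} a c (p + q + t) = digit d (p + r) (p + t) c"
proof -
  let ?S = "{p..<p+q}"
  let ?C = "{0..<N} - ?S"
  have cardC: "card ?C = p + r"
  proof -
    have "?S \<subseteq> {0..<N}" using N by auto
    then have "card ?C = card {0..<N} - card ?S" by (simp add: card_Diff_subset)
    then show ?thesis using N by simp
  qed
  show "assign d N ?S a c k = digit d (p + r) k c" if k: "k < p"
  proof -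
    have "{s \<in> ?C. s < k} = {0..<k}" using k N by auto
    then show ?thesis using k unfolding assign_def Let_def cardC by simp
  qed
  show "assign d N ?S a c (p + t) = digit d q t a" if t: "t < q"
  proof -
    have "{s \<in> ?S. s < p + t} = {p..<p+t}" using t by auto
    then show ?thesis using t unfolding assign_def Let_def by simp
  qed
  show "assign d N ?S a c (p + q + t) = digit d (p + r) (p + t) c" if t: "t < r"
  proof -
    have "{s \<in> ?C. s < p + q + t} = {0..<p} \<union> {p+q..<p+q+t}" using t N by auto
    moreover have "card ({0..<p} \<union> {p+q..<p+q+t}) = p + t"
      by (subst card_Un_disjoint) auto
    ultimately have "card {s \<in> ?C. s < p + q + t} = p + t" by simp
    then show ?thesis using t N unfolding assign_def Let_def cardC by simp
  qed
qed

lemma enc_assign_interval: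
  assumes d: "d > 0" and N: "N = p + q + r" and a: "a < d ^ q" and c: "c < d ^ (p + r)"
  shows "enc d N (assign d N {p..<p+q} a c) = (c div d ^ r) * (d ^ q * d ^ r) + a * d ^ r + c mod d ^ r"
proof -
  define g where "g = assign d N {p..<p+q} a c"
  have "enc d N g = enc d p g * d ^ (q + r) + (enc d q (\<lambda>k. g (p + k)) * d ^ r + enc d r (\<lambda>k. g (p + q + k)))"
    unfolding N using enc_add[of d p "q + r" g] enc_add[of d q r "\<lambda>k. g (p + k)"]
    by (simp add: add.assoc)
  also have "enc d p g = enc d p (\<lambda>k. digit d p k (c div d ^ r))"
    by (rule enc_cong) (simp add: g_def assign_interval(1)[OF N] digit_high)
  also have "\<dots> = c div d ^ r"
    by (rule enc_digit[OF _ d]) (use c d in \<open>simp add: div_less_iff_less_mult power_add mult.commute\<close>)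
  also have "enc d q (\<lambda>k. g (p + k)) = enc d q (\<lambda>k. digit d q k a)"
    by (rule enc_cong) (simp add: g_def assign_interval(2)[OF N])
  also have "\<dots> = a" by (rule enc_digit[OF a d])
  also have "enc d r (\<lambda>k. g (p + q + k)) = enc d r (\<lambda>k. digit d r k (c mod d ^ r))"
    by (rule enc_cong) (simp add: g_def assign_interval(3)[OF N] digit_low)
  also have "\<dots> = c mod d ^ r" by (rule enc_digit[OF _ d]) (use d in simp)
  finally show ?thesis unfolding g_def by (simp add: power_add)
qed

lemma marg_interval_eq_partial_trace:
  assumes d: "d > 0" and pq: "p + q \<le> N"
  shows "marg d N {p..<p+q} U = partial_trace (d ^ p) (d ^ q) (d ^ (N - p - q)) U"
proof -
  define r where "r = N - p - q"
  have N: "N = p + q + r" unfolding r_def using pq by simp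
  have Nq: "N - q = p + r" using N by simp
  show ?thesis
  proof (rule eq_matI)
    fix a b assume "a < dim_row (partial_trace (d ^ p) (d ^ q) (d ^ (N - p - q)) U)" "b < dim_col (partial_trace (d ^ p) (d ^ q) (d ^ (N - p - q)) U)"
    then have a: "a < d ^ q" and b: "b < d ^ q" by auto
    have "marg d N {p..<p+q} U $$ (a,b) = (\<Sum>c<d ^ (p + r). U $$ (enc d N (assign d N {p..<p+q} a c), enc d N (assign d N {p..<p+q} b c)))"
      unfolding marg_def Let_def using a b Nq by simp
    also have "\<dots> = (\<Sum>c<d ^ (p + r). U $$ ((c div d ^ r) * (d ^ q * d ^ r) + a * d ^ r + c mod d ^ r, (c div d ^ r) * (d ^ q * d ^ r) + b * d ^ r + c mod d ^ r))"
      by (intro sum.cong refl) (simp add: enc_assign_interval[OF d N a] enc_assign_interval[OF d N b])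
    also have "\<dots> = (\<Sum>x<d ^ p. \<Sum>z<d ^ r. U $$ (x * (d ^ q * d ^ r) + a * d ^ r + z, x * (d ^ q * d ^ r) + b * d ^ r + z))"
      unfolding power_add sum_lessThan_mult using d by simp
    also have "\<dots> = partial_trace (d ^ p) (d ^ q) (d ^ (N - p - q)) U $$ (a,b)"
      using a b unfolding r_def by (simp add: partial_trace_index)
    finally show "marg d N {p..<p+q} U $$ (a,b) = partial_trace (d ^ p) (d ^ q) (d ^ (N - p - q)) U $$ (a,b)" .
  qed (simp_all add: marg_def Let_def)
qed

lemma partial_trace_partial_trace:
  "partial_trace a b c (partial_trace e (a*b*c) f U) = partial_trace (e*a) b (c*f) U"
proof (rule eq_matI)
  fix p q assume "p < dim_row (partial_trace (e*a) b (c*f) U)" "q < dim_col (partial_trace (e*a) b (c*f) U)"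
  then have p: "p < b" and q: "q < b" by auto
  have "partial_trace a b c (partial_trace e (a*b*c) f U) $$ (p,q)
     = (\<Sum>x<a. \<Sum>z<c. \<Sum>x'<e. \<Sum>z'<f. U $$ (x'*((a*b*c)*f) + (x*(b*c) + p*c + z)*f + z', x'*((a*b*c)*f) + (x*(b*c) + q*c + z)*f + z'))"
    using p q mult_add_less_mult3 by (simp add: partial_trace_index)
  also have "\<dots> = (\<Sum>x'<e. \<Sum>x<a. \<Sum>z<c. \<Sum>z'<f. U $$ (x'*((a*b*c)*f) + (x*(b*c) + p*c + z)*f + z', x'*((a*b*c)*f) + (x*(b*c) + q*c + z)*f + z'))"
    by (subst sum.swap, subst sum.swap, rule refl)
  also have "\<dots> = (\<Sum>x'<e. \<Sum>x<a. \<Sum>z<c. \<Sum>z'<f. U $$ ((x'*a + x)*(b*(c*f)) + p*(c*f) + (z*f + z'), (x'*a + x)*(b*(c*f)) + q*(c*f) + (z*f + z')))"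
    by (intro sum.cong refl) (simp add: algebra_simps)
  also have "\<dots> = partial_trace (e*a) b (c*f) U $$ (p,q)"
    using p q by (simp add: partial_trace_index sum_lessThan_mult)
  finally show "partial_trace a b c (partial_trace e (a*b*c) f U) $$ (p,q) = partial_trace (e*a) b (c*f) U $$ (p,q)" .
qed simp_all

lemma partial_trace_1_1:
  assumes "U \<in> carrier_mat D D"
  shows "partial_trace 1 D 1 U = U"
  using assms by (intro eq_matI) (auto simp: partial_trace_index)

section \<open>Inner products, Parseval and product bases\<close>

definition cinner :: "nat \<Rightarrow> (nat \<Rightarrow> complex) \<Rightarrow> (nat \<Rightarrow> complex) \<Rightarrow> complex" where
  "cinner n u w = (\<Sum>x<n. cnj (u x) * w x)"

definition cquad :: "nat \<Rightarrow> complex mat \<Rightarrow> (nat \<Rightarrow> complex) \<Rightarrow> complex" where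
  "cquad n M w = (\<Sum>x<n. cnj (w x) * (\<Sum>y<n. M $$ (x,y) * w y))"

lemma cinner_cnj: "cnj (cinner n u w) = cinner n w u"
  unfolding cinner_def by (simp add: mult.commute)

lemma cinner_self: "cinner n w w = of_real (\<Sum>x<n. (cmod (w x))\<^sup>2)"
  unfolding cinner_def of_real_sum by (intro sum.cong refl) (rule cnj_mult_self)

lemma orthonormal_cinner: "orthonormal n k v \<Longrightarrow> i < k \<Longrightarrow> j < k \<Longrightarrow> cinner n (v i) (v j) = (if i = j then 1 else 0)"
  unfolding orthonormal_def cinner_def by blast

lemma cquad_eigenvector:
  assumes o: "orthonormal n n v" and e: "eigenpairs n n M v l" and i: "i < n"
  shows "cquad n M (v i) = of_real (l i)"
proof -
  have "cquad n M (v i) = (\<Sum>x<n. of_real (l i) * (cnj (v i x) * v i x))"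
    unfolding cquad_def using e i unfolding eigenpairs_def by (intro sum.cong refl) (simp add: mult_ac)
  also have "\<dots> = of_real (l i) * cinner n (v i) (v i)" unfolding cinner_def by (simp add: sum_distrib_left)
  finally show ?thesis using orthonormal_cinner[OF o i i] by simp
qed

lemma cquad_expansion:
  assumes M: "M \<in> carrier_mat n n" and o: "orthonormal n n v" and e: "eigenpairs n n M v l"
  shows "cquad n M w = (\<Sum>i<n. of_real (l i) * of_real ((cmod (cinner n (v i) w))\<^sup>2))"
proof -
  have "cquad n M w = (\<Sum>x<n. \<Sum>y<n. \<Sum>i<n. of_real (l i) * (cnj (w x) * v i x) * (cnj (v i y) * w y))"
    unfolding cquad_def
  proof (intro sum.cong refl)
    fix x assume x: "x \<in> {..<n}"
    show "cnj (w x) * (\<Sum>y<n. M $$ (x,y) * w y) = (\<Sum>y<n. \<Sum>i<n. of_real (l i) * (cnj (w x) * v i x) * (cnj (v i y) * w y))"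
      unfolding sum_distrib_left
    proof (intro sum.cong refl)
      fix y assume y: "y \<in> {..<n}"
      have "M $$ (x,y) = (\<Sum>i<n. of_real (l i) * v i x * cnj (v i y))" using eigenpairs_expansion[OF M o e] x y by simp
      then show "cnj (w x) * (M $$ (x,y) * w y) = (\<Sum>i<n. of_real (l i) * (cnj (w x) * v i x) * (cnj (v i y) * w y))"
        by (simp add: sum_distrib_left sum_distrib_right mult_ac)
    qed
  qed
  also have "\<dots> = (\<Sum>i<n. \<Sum>x<n. \<Sum>y<n. of_real (l i) * (cnj (w x) * v i x) * (cnj (v i y) * w y))"
    by (subst sum.swap, rule sum.cong[OF refl], subst sum.swap, rule refl)
  also have "\<dots> = (\<Sum>i<n. of_real (l i) * (cnj (cinner n (v i) w) * cinner n (v i) w))"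
  proof (intro sum.cong refl)
    fix i
    have "cnj (cinner n (v i) w) = (\<Sum>x<n. cnj (w x) * v i x)" unfolding cinner_def by (simp add: mult.commute)
    then show "(\<Sum>x<n. \<Sum>y<n. of_real (l i) * (cnj (w x) * v i x) * (cnj (v i y) * w y)) = of_real (l i) * (cnj (cinner n (v i) w) * cinner n (v i) w)"
      unfolding cinner_def apply (simp add: sum_distrib_left sum_distrib_right mult.assoc)
      by (rule sum.swap)
  qed
  also have "\<dots> = (\<Sum>i<n. of_real (l i) * of_real ((cmod (cinner n (v i) w))\<^sup>2))"
    by (simp only: cnj_mult_self)
  finally show ?thesis .
qed

lemma parseval_complex:
  assumes o: "orthonormal n n v"
  shows "(\<Sum>i<n. cnj (cinner n (v i) w) * cinner n (v i) w) = cinner n w w"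
proof -
  have "(\<Sum>i<n. cnj (cinner n (v i) w) * cinner n (v i) w) = (\<Sum>i<n. \<Sum>x<n. \<Sum>y<n. cnj (w x) * w y * (v i x * cnj (v i y)))"
  proof (intro sum.cong refl)
    fix i
    have "cnj (cinner n (v i) w) = (\<Sum>x<n. cnj (w x) * v i x)" unfolding cinner_def by (simp add: mult.commute)
    then show "cnj (cinner n (v i) w) * cinner n (v i) w = (\<Sum>x<n. \<Sum>y<n. cnj (w x) * w y * (v i x * cnj (v i y)))"
      unfolding cinner_def by (simp add: sum_distrib_left sum_distrib_right mult_ac)
  qed
  also have "\<dots> = (\<Sum>x<n. \<Sum>y<n. cnj (w x) * w y * (\<Sum>i<n. v i x * cnj (v i y)))"
    by (subst sum.swap, rule sum.cong[OF refl], subst sum.swap, simp add: sum_distrib_left)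
  also have "\<dots> = (\<Sum>x<n. \<Sum>y<n. cnj (w x) * w y * (if x = y then 1 else 0))"
    using orthonormal_complete[OF o] by (intro sum.cong refl) auto
  also have "\<dots> = cinner n w w" unfolding cinner_def by (simp add: if_one_zero_mult sum.delta sum.delta')
  finally show ?thesis .
qed

lemma parseval:
  assumes o: "orthonormal n n v"
  shows "(\<Sum>i<n. (cmod (cinner n (v i) w))\<^sup>2) = (\<Sum>x<n. (cmod (w x))\<^sup>2)"
proof -
  have "of_real (\<Sum>i<n. (cmod (cinner n (v i) w))\<^sup>2) = (\<Sum>i<n. cnj (cinner n (v i) w) * cinner n (v i) w)"
    unfolding of_real_sum by (intro sum.cong refl) (simp only: cnj_mult_self)
  also have "\<dots> = of_real (\<Sum>x<n. (cmod (w x))\<^sup>2)" using parseval_complex[OF o] cinner_self by simp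
  finally show ?thesis by (simp only: of_real_eq_iff)
qed

definition tensor_vec :: "nat \<Rightarrow> (nat \<Rightarrow> complex) \<Rightarrow> (nat \<Rightarrow> complex) \<Rightarrow> nat \<Rightarrow> complex" where
  "tensor_vec D2 f g t = f (t div D2) * g (t mod D2)"

lemma tensor_vec_index: "y < D2 \<Longrightarrow> tensor_vec D2 f g (x * D2 + y) = f x * g y"
  unfolding tensor_vec_def by simp

lemma cinner_tensor_vec: "cinner (D1*D2) (tensor_vec D2 f g) (tensor_vec D2 f' g') = cinner D1 f f' * cinner D2 g g'"
proof -
  have "cinner (D1*D2) (tensor_vec D2 f g) (tensor_vec D2 f' g') = (\<Sum>x<D1. \<Sum>y<D2. cnj (tensor_vec D2 f g (x*D2+y)) * tensor_vec D2 f' g' (x*D2+y))"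
    unfolding cinner_def by (rule sum_lessThan_mult)
  also have "\<dots> = (\<Sum>x<D1. \<Sum>y<D2. (cnj (f x) * f' x) * (cnj (g y) * g' y))"
    by (intro sum.cong refl) (simp add: tensor_vec_index mult_ac)
  also have "\<dots> = cinner D1 f f' * cinner D2 g g'" unfolding cinner_def
    apply (simp add: sum_distrib_left sum_distrib_right) by (rule sum.swap)
  finally show ?thesis .
qed


lemma sum_swap3:
  fixes F :: "nat \<Rightarrow> nat \<Rightarrow> nat \<Rightarrow> complex"
  shows "(\<Sum>b<B. \<Sum>t<T. \<Sum>s<S. F b t s) = (\<Sum>t<T. \<Sum>s<S. \<Sum>b<B. F b t s)"
  by (subst sum.swap, rule sum.cong[OF refl], rule sum.swap)

lemma sum_cquad_tensor_right:
  assumes o: "orthonormal D2 D2 g"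
  shows "(\<Sum>b<D2. cquad (D1*D2) \<rho> (tensor_vec D2 f (g b))) = cquad D1 (partial_trace 1 D1 D2 \<rho>) f"
proof -
  let ?N = "D1*D2"
  have "(\<Sum>b<D2. cquad ?N \<rho> (tensor_vec D2 f (g b)))
      = (\<Sum>b<D2. \<Sum>t<?N. \<Sum>s<?N. \<rho> $$ (t,s) * (cnj (f (t div D2)) * f (s div D2)) * (cnj (g b (t mod D2)) * g b (s mod D2)))"
    unfolding cquad_def tensor_vec_def by (simp add: sum_distrib_left mult_ac)
  also have "\<dots> = (\<Sum>t<?N. \<Sum>s<?N. \<rho> $$ (t,s) * (cnj (f (t div D2)) * f (s div D2)) * (\<Sum>b<D2. cnj (g b (t mod D2)) * g b (s mod D2)))"
    by (subst sum_swap3) (simp add: sum_distrib_left)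
  also have "\<dots> = (\<Sum>x<D1. \<Sum>y<D2. \<Sum>x'<D1. \<Sum>y'<D2. \<rho> $$ (x*D2+y, x'*D2+y') * (cnj (f x) * f x') * (if y' = y then 1 else 0))"
  proof -
    have c: "(\<Sum>b<D2. cnj (g b y) * g b y') = (if y' = y then 1 else 0)" if "y < D2" "y' < D2" for y y'
      using orthonormal_complete[OF o that(2) that(1)] by (simp add: mult.commute)
    show ?thesis
      unfolding sum_lessThan_mult[of _ D1 D2]
      by (intro sum.cong refl) (simp add: c)
  qed
  also have "\<dots> = (\<Sum>x<D1. \<Sum>y<D2. \<Sum>x'<D1. \<rho> $$ (x*D2+y, x'*D2+y) * (cnj (f x) * f x'))"
    by (intro sum.cong refl) (simp add: if_one_zero_mult sum.delta)
  also have "\<dots> = (\<Sum>x<D1. \<Sum>x'<D1. \<Sum>y<D2. \<rho> $$ (x*D2+y, x'*D2+y) * (cnj (f x) * f x'))"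
    by (rule sum.cong[OF refl], rule sum.swap)
  also have "\<dots> = cquad D1 (partial_trace 1 D1 D2 \<rho>) f"
    unfolding cquad_def by (intro sum.cong refl) (simp add: partial_trace_index sum_distrib_left sum_distrib_right mult_ac)
  finally show ?thesis .
qed

lemma sum_cquad_tensor_left:
  assumes o: "orthonormal D1 D1 f"
  shows "(\<Sum>a<D1. cquad (D1*D2) \<rho> (tensor_vec D2 (f a) g)) = cquad D2 (partial_trace D1 D2 1 \<rho>) g"
proof -
  let ?N = "D1*D2"
  have "(\<Sum>a<D1. cquad ?N \<rho> (tensor_vec D2 (f a) g))
      = (\<Sum>a<D1. \<Sum>t<?N. \<Sum>s<?N. \<rho> $$ (t,s) * (cnj (g (t mod D2)) * g (s mod D2)) * (cnj (f a (t div D2)) * f a (s div D2)))"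
    unfolding cquad_def tensor_vec_def by (simp add: sum_distrib_left mult_ac)
  also have "\<dots> = (\<Sum>t<?N. \<Sum>s<?N. \<rho> $$ (t,s) * (cnj (g (t mod D2)) * g (s mod D2)) * (\<Sum>a<D1. cnj (f a (t div D2)) * f a (s div D2)))"
    by (subst sum_swap3) (simp add: sum_distrib_left)
  also have "\<dots> = (\<Sum>x<D1. \<Sum>y<D2. \<Sum>x'<D1. \<Sum>y'<D2. \<rho> $$ (x*D2+y, x'*D2+y') * (cnj (g y) * g y') * (if x' = x then 1 else 0))"
  proof -
    have c: "(\<Sum>a<D1. cnj (f a x) * f a x') = (if x' = x then 1 else 0)" if "x < D1" "x' < D1" for x x'
      using orthonormal_complete[OF o that(2) that(1)] by (simp add: mult.commute)
    show ?thesis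
      unfolding sum_lessThan_mult[of _ D1 D2]
      by (intro sum.cong refl) (simp add: c)
  qed
  also have "\<dots> = (\<Sum>x<D1. \<Sum>y<D2. \<Sum>y'<D2. \<rho> $$ (x*D2+y, x*D2+y') * (cnj (g y) * g y'))"
  proof (rule sum.cong[OF refl], rule sum.cong[OF refl])
    fix x y assume "x \<in> {..<D1}" "y \<in> {..<D2}"
    show "(\<Sum>x'<D1. \<Sum>y'<D2. \<rho> $$ (x*D2+y, x'*D2+y') * (cnj (g y) * g y') * (if x' = x then 1 else 0))
        = (\<Sum>y'<D2. \<rho> $$ (x*D2+y, x*D2+y') * (cnj (g y) * g y'))"
    proof -
      have "(\<Sum>y'<D2. \<rho> $$ (x*D2+y, x'*D2+y') * (cnj (g y) * g y') * (if x' = x then 1 else 0))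
          = (if x' = x then (\<Sum>y'<D2. \<rho> $$ (x*D2+y, x'*D2+y') * (cnj (g y) * g y')) else 0)" for x'
        by simp
      then show ?thesis using \<open>x \<in> {..<D1}\<close> by (simp add: sum.delta')
    qed
  qed
  also have "\<dots> = (\<Sum>y<D2. \<Sum>y'<D2. \<Sum>x<D1. \<rho> $$ (x*D2+y, x*D2+y') * (cnj (g y) * g y'))"
    by (rule sum_swap3)
  also have "\<dots> = cquad D2 (partial_trace D1 D2 1 \<rho>) g"
    unfolding cquad_def by (intro sum.cong refl) (simp add: partial_trace_index sum_distrib_left sum_distrib_right mult_ac)
  finally show ?thesis .
qed

lemma orthonormal_norm:
  assumes o: "orthonormal n k v" and i: "i < k"
  shows "(\<Sum>x<n. (cmod (v i x))\<^sup>2) = 1"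
proof -
  have "cinner n (v i) (v i) = 1" using orthonormal_cinner[OF o i i] by simp
  then have "complex_of_real (\<Sum>x<n. (cmod (v i x))\<^sup>2) = 1" by (simp only: cinner_self)
  then show ?thesis by (simp only: of_real_eq_1_iff)
qed

lemma cmod_cinner_commute: "cmod (cinner n u w) = cmod (cinner n w u)"
  by (metis complex_mod_cnj cinner_cnj)

lemma orthonormal_overlap_sums:
  assumes ou: "orthonormal n n u" and ow: "orthonormal n n w"
  shows "i < n \<Longrightarrow> (\<Sum>j<n. (cmod (cinner n (w j) (u i)))\<^sup>2) = 1"
    and "j < n \<Longrightarrow> (\<Sum>i<n. (cmod (cinner n (w j) (u i)))\<^sup>2) = 1"
  using parseval[OF ow, of "u i"] orthonormal_norm[OF ou, of i]
    parseval[OF ou, of "w j"] orthonormal_norm[OF ow, of j] cmod_cinner_commute by simp_all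

lemma orthonormal_tensor:
  assumes of: "orthonormal D1 D1 f" and og: "orthonormal D2 D2 g"
  shows "orthonormal (D1*D2) (D1*D2) (\<lambda>j. tensor_vec D2 (f (j div D2)) (g (j mod D2)))"
  unfolding orthonormal_def
proof (intro allI impI)
  fix i j assume i: "i < D1*D2" and j: "j < D1*D2"
  have D2: "D2 > 0" using i by (cases D2) auto
  have id: "i div D2 < D1" "j div D2 < D1" using i j by (auto simp: less_mult_imp_div_less)
  have im: "i mod D2 < D2" "j mod D2 < D2" using D2 by auto
  have "(\<Sum>x<D1*D2. cnj (tensor_vec D2 (f (i div D2)) (g (i mod D2)) x) * tensor_vec D2 (f (j div D2)) (g (j mod D2)) x)
      = cinner (D1*D2) (tensor_vec D2 (f (i div D2)) (g (i mod D2))) (tensor_vec D2 (f (j div D2)) (g (j mod D2)))"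
    unfolding cinner_def ..
  also have "\<dots> = cinner D1 (f (i div D2)) (f (j div D2)) * cinner D2 (g (i mod D2)) (g (j mod D2))" by (rule cinner_tensor_vec)
  also have "\<dots> = (if i div D2 = j div D2 then 1 else 0) * (if i mod D2 = j mod D2 then 1 else 0)"
    using orthonormal_cinner[OF of id] orthonormal_cinner[OF og im] by simp
  also have "\<dots> = (if i = j then 1 else 0)"
    by (auto, metis div_mult_mod_eq)
  finally show "(\<Sum>x<D1*D2. cnj (tensor_vec D2 (f (i div D2)) (g (i mod D2)) x) * tensor_vec D2 (f (j div D2)) (g (j mod D2)) x)
      = (if i = j then 1 else 0)" .
qed

section \<open>Subadditivity of the von Neumann entropy\<close>

lemma sum_mult_pos_stochastic:
  fixes c r :: "nat \<Rightarrow> real"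
  assumes c0: "\<And>j. j < m \<Longrightarrow> 0 \<le> c j" and c1: "(\<Sum>j<m. c j) = 1"
    and r0: "\<And>j. j < m \<Longrightarrow> 0 \<le> r j" and supp: "\<And>j. j < m \<Longrightarrow> 0 < c j \<Longrightarrow> 0 < r j"
  shows "0 < (\<Sum>j<m. c j * r j)"
proof -
  have "\<exists>j<m. 0 < c j"
  proof (rule ccontr)
    assume none: "\<not> ?thesis"
    have "c j = 0" if "j < m" for j using none c0[OF that] that by force
    then have "(\<Sum>j<m. c j) = 0" by simp
    with c1 show False by simp
  qed
  then obtain j where j: "j < m" "0 < c j" by blast
  have "0 < c j * r j" using j supp by simp
  also have "c j * r j \<le> (\<Sum>j<m. c j * r j)" using c0 r0 j by (intro member_le_sum) auto
  finally show ?thesis .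
qed

lemma sum_mult_ln_le_ln_sum:
  fixes c r :: "nat \<Rightarrow> real"
  assumes c0: "\<And>j. j < m \<Longrightarrow> 0 \<le> c j" and c1: "(\<Sum>j<m. c j) = 1"
    and r0: "\<And>j. j < m \<Longrightarrow> 0 \<le> r j" and supp: "\<And>j. j < m \<Longrightarrow> 0 < c j \<Longrightarrow> 0 < r j"
  shows "(\<Sum>j<m. c j * ln (r j)) \<le> ln (\<Sum>j<m. c j * r j)"
proof -
  define t where "t = (\<Sum>j<m. c j * r j)"
  have tpos: "0 < t" unfolding t_def using assms by (rule sum_mult_pos_stochastic)
  have "c j * (ln (r j) - ln t) \<le> c j * (r j / t - 1)" if j: "j < m" for j
  proof (cases "c j = 0")
    case False
    then have cj: "0 < c j" and rj: "0 < r j" using c0 supp j by (auto simp: less_le)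
    have "ln (r j) - ln t = ln (r j / t)" using rj tpos by (simp add: ln_div)
    also have "\<dots> \<le> r j / t - 1" using rj tpos by (intro ln_le_minus_one) simp
    finally show ?thesis using cj by (intro mult_left_mono) auto
  qed simp
  then have "(\<Sum>j<m. c j * (ln (r j) - ln t)) \<le> (\<Sum>j<m. c j * (r j / t - 1))"
    by (intro sum_mono) auto
  also have "\<dots> = 0"
    using tpos c1 by (simp add: t_def right_diff_distrib sum_subtractf sum_divide_distrib[symmetric])
  finally show ?thesis
    using c1 by (simp add: t_def right_diff_distrib sum_subtractf sum_distrib_right[symmetric])
qed

text \<open>Gibbs' inequality for a distribution \<open>r\<close> seen through a column-substochastic mixing matrix \<open>c\<close>,
  the classical core of Klein's inequality.\<close>

lemma gibbs_inequality_mixing: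
  fixes p r :: "nat \<Rightarrow> real" and c :: "nat \<Rightarrow> nat \<Rightarrow> real"
  assumes p0: "\<And>i. i < n \<Longrightarrow> 0 \<le> p i" and p1: "(\<Sum>i<n. p i) = 1"
    and c0: "\<And>i j. i < n \<Longrightarrow> j < m \<Longrightarrow> 0 \<le> c i j"
    and crow: "\<And>i. i < n \<Longrightarrow> (\<Sum>j<m. c i j) = 1"
    and ccol: "\<And>j. j < m \<Longrightarrow> (\<Sum>i<n. c i j) \<le> 1"
    and r0: "\<And>j. j < m \<Longrightarrow> 0 \<le> r j" and r1: "(\<Sum>j<m. r j) \<le> 1"
    and supp: "\<And>i j. i < n \<Longrightarrow> j < m \<Longrightarrow> 0 < p i \<Longrightarrow> 0 < c i j \<Longrightarrow> 0 < r j"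
  shows "(\<Sum>i<n. p i * (\<Sum>j<m. c i j * ln (r j))) \<le> (\<Sum>i<n. p i * ln (p i))"
proof -
  define t where "t i = (\<Sum>j<m. c i j * r j)" for i
  have t0: "0 \<le> t i" if "i < n" for i unfolding t_def using c0 r0 that by (intro sum_nonneg) auto
  have step: "p i * (\<Sum>j<m. c i j * ln (r j)) \<le> p i * ln (p i) + t i - p i" if i: "i < n" for i
  proof (cases "p i = 0")
    case True then show ?thesis using t0[OF i] by simp
  next
    case False
    then have pi: "0 < p i" using p0[OF i] by simp
    have jen: "(\<Sum>j<m. c i j * ln (r j)) \<le> ln (t i)"
      unfolding t_def using c0 crow r0 supp i pi by (intro sum_mult_ln_le_ln_sum) auto
    have "0 < t i" unfolding t_def using c0 crow r0 supp i pi by (intro sum_mult_pos_stochastic) auto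
    then have "ln (t i) - ln (p i) \<le> t i / p i - 1"
      using pi ln_le_minus_one[of "t i / p i"] by (simp add: ln_div)
    then have "p i * (ln (t i) - ln (p i)) \<le> p i * (t i / p i - 1)" using pi by (intro mult_left_mono) auto
    then have "p i * ln (t i) \<le> p i * ln (p i) + t i - p i" using pi by (simp add: algebra_simps)
    moreover have "p i * (\<Sum>j<m. c i j * ln (r j)) \<le> p i * ln (t i)" using jen pi by (intro mult_left_mono) auto
    ultimately show ?thesis by linarith
  qed
  have "(\<Sum>i<n. p i * (\<Sum>j<m. c i j * ln (r j))) \<le> (\<Sum>i<n. p i * ln (p i) + t i - p i)"
    using step by (intro sum_mono) auto
  also have "\<dots> = (\<Sum>i<n. p i * ln (p i)) + (\<Sum>i<n. t i) - 1"
    using p1 by (simp add: sum.distrib sum_subtractf)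
  also have "(\<Sum>i<n. t i) \<le> 1"
  proof -
    have "(\<Sum>i<n. t i) = (\<Sum>j<m. r j * (\<Sum>i<n. c i j))"
      unfolding t_def by (subst sum.swap) (simp add: sum_distrib_left mult.commute)
    also have "\<dots> \<le> (\<Sum>j<m. r j * 1)"
      using ccol r0 by (intro sum_mono mult_left_mono) auto
    also have "\<dots> \<le> 1" using r1 by simp
    finally show ?thesis .
  qed
  finally show ?thesis by simp
qed

lemma entropy_le_ln_card:
  fixes l :: "nat \<Rightarrow> real"
  assumes l0: "\<And>i. i < n \<Longrightarrow> 0 \<le> l i" and l1: "(\<Sum>i<n. l i) = 1"
  shows "- (\<Sum>i<n. l i * ln (l i)) \<le> ln (real n)"
proof -
  have n: "n > 0" using l1 by (cases n) auto
  have step: "l i * (- ln (l i)) \<le> l i * ln (real n) + 1 / real n - l i" if i: "i < n" for i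
  proof (cases "l i = 0")
    case True then show ?thesis using n by simp
  next
    case False
    then have li: "0 < l i" using l0[OF i] by simp
    have "ln (1 / (real n * l i)) \<le> 1 / (real n * l i) - 1" using li n by (intro ln_le_minus_one) simp
    moreover have "ln (1 / (real n * l i)) = - ln (real n) - ln (l i)" using li n by (simp add: ln_div ln_mult)
    ultimately have "- ln (real n) - ln (l i) \<le> 1 / (real n * l i) - 1" by simp
    then have "l i * (- ln (real n) - ln (l i)) \<le> l i * (1 / (real n * l i) - 1)" using li by (intro mult_left_mono) auto
    then show ?thesis using li n by (simp add: algebra_simps)
  qed
  have "(\<Sum>i<n. l i * (- ln (l i))) \<le> (\<Sum>i<n. l i * ln (real n) + 1 / real n - l i)"
    using step by (intro sum_mono) auto
  also have "\<dots> = ln (real n)" using l1 n by (simp add: sum.distrib sum_subtractf sum_distrib_right[symmetric])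
  finally show ?thesis by (simp add: sum_negf)
qed


lemma marginals_pos:
  fixes q :: "nat \<Rightarrow> nat \<Rightarrow> real"
  assumes q0: "\<And>a b. a < D1 \<Longrightarrow> b < D2 \<Longrightarrow> 0 \<le> q a b"
    and rows: "\<And>a. a < D1 \<Longrightarrow> (\<Sum>b<D2. q a b) = al a"
    and cols: "\<And>b. b < D2 \<Longrightarrow> (\<Sum>a<D1. q a b) = be b"
    and ab: "a < D1" "b < D2" and pos: "0 < q a b"
  shows "0 < al a" and "0 < be b"
proof -
  have "q a b \<le> (\<Sum>b<D2. q a b)" using q0 ab by (intro member_le_sum) auto
  then show "0 < al a" using rows[OF ab(1)] pos by simp
  have "q a b \<le> (\<Sum>a<D1. q a b)" using q0 ab by (intro member_le_sum) auto
  then show "0 < be b" using cols[OF ab(2)] pos by simp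
qed

lemma sum_ln_product_marginals:
  fixes q :: "nat \<Rightarrow> nat \<Rightarrow> real"
  assumes q0: "\<And>a b. a < D1 \<Longrightarrow> b < D2 \<Longrightarrow> 0 \<le> q a b"
    and rows: "\<And>a. a < D1 \<Longrightarrow> (\<Sum>b<D2. q a b) = al a"
    and cols: "\<And>b. b < D2 \<Longrightarrow> (\<Sum>a<D1. q a b) = be b"
  shows "(\<Sum>a<D1. \<Sum>b<D2. q a b * ln (al a * be b))
    = (\<Sum>a<D1. al a * ln (al a)) + (\<Sum>b<D2. be b * ln (be b))"
proof -
  have split: "q a b * ln (al a * be b) = q a b * ln (al a) + q a b * ln (be b)" if ab: "a < D1" "b < D2" for a b
  proof (cases "q a b = 0")
    case False
    then have "0 < q a b" using q0[OF ab] by simp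
    then show ?thesis using marginals_pos[OF q0 rows cols ab] by (simp add: ln_mult distrib_left)
  qed simp
  have "(\<Sum>a<D1. \<Sum>b<D2. q a b * ln (al a)) = (\<Sum>a<D1. al a * ln (al a))"
    using rows by (simp add: sum_distrib_right[symmetric])
  moreover have "(\<Sum>a<D1. \<Sum>b<D2. q a b * ln (be b)) = (\<Sum>b<D2. be b * ln (be b))"
    using cols by (subst sum.swap) (simp add: sum_distrib_right[symmetric])
  ultimately show ?thesis using split by (simp add: sum.distrib)
qed

lemma density_op_partial_trace_left: "density_op (D1*D2) \<rho> \<Longrightarrow> density_op D1 (partial_trace 1 D1 D2 \<rho>)"
  using density_op_partial_trace[of 1 D1 D2 \<rho>] by simp

lemma density_op_partial_trace_right: "density_op (D1*D2) \<rho> \<Longrightarrow> density_op D2 (partial_trace D1 D2 1 \<rho>)"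
  using density_op_partial_trace[of D1 D2 1 \<rho>] by simp

lemma sum_cquad_product_eigenbasis:
  assumes of: "orthonormal D1 D1 f" and ef: "eigenpairs D1 D1 (partial_trace 1 D1 D2 \<rho>) f al"
    and og: "orthonormal D2 D2 g" and eg: "eigenpairs D2 D2 (partial_trace D1 D2 1 \<rho>) g be"
  shows "a < D1 \<Longrightarrow> (\<Sum>b<D2. cquad (D1*D2) \<rho> (tensor_vec D2 (f a) (g b))) = of_real (al a)"
    and "b < D2 \<Longrightarrow> (\<Sum>a<D1. cquad (D1*D2) \<rho> (tensor_vec D2 (f a) (g b))) = of_real (be b)"
  using sum_cquad_tensor_right[OF og] cquad_eigenvector[OF of ef]
    sum_cquad_tensor_left[OF of] cquad_eigenvector[OF og eg] by simp_all

lemma spectral_weights_product_eigenbasis: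
  assumes R: "\<rho> \<in> carrier_mat (D1*D2) (D1*D2)"
    and ou: "orthonormal (D1*D2) (D1*D2) u" and eu: "eigenpairs (D1*D2) (D1*D2) \<rho> u p"
    and of: "orthonormal D1 D1 f" and ef: "eigenpairs D1 D1 (partial_trace 1 D1 D2 \<rho>) f al"
    and og: "orthonormal D2 D2 g" and eg: "eigenpairs D2 D2 (partial_trace D1 D2 1 \<rho>) g be"
  shows "a < D1 \<Longrightarrow> (\<Sum>b<D2. \<Sum>i<D1*D2. p i * (cmod (cinner (D1*D2) (tensor_vec D2 (f a) (g b)) (u i)))\<^sup>2) = al a"
    and "b < D2 \<Longrightarrow> (\<Sum>a<D1. \<Sum>i<D1*D2. p i * (cmod (cinner (D1*D2) (tensor_vec D2 (f a) (g b)) (u i)))\<^sup>2) = be b"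
proof -
  have weight: "(\<Sum>i<D1*D2. p i * (cmod (cinner (D1*D2) w (u i)))\<^sup>2) = Re (cquad (D1*D2) \<rho> w)" for w
  proof -
    have "cquad (D1*D2) \<rho> w = of_real (\<Sum>i<D1*D2. p i * (cmod (cinner (D1*D2) w (u i)))\<^sup>2)"
      unfolding cquad_expansion[OF R ou eu] of_real_sum by (simp add: cmod_cinner_commute[of _ w])
    then show ?thesis by simp
  qed
  show "a < D1 \<Longrightarrow> (\<Sum>b<D2. \<Sum>i<D1*D2. p i * (cmod (cinner (D1*D2) (tensor_vec D2 (f a) (g b)) (u i)))\<^sup>2) = al a"
    using sum_cquad_product_eigenbasis(1)[OF of ef og eg] by (simp only: weight flip: Re_sum) simp
  show "b < D2 \<Longrightarrow> (\<Sum>a<D1. \<Sum>i<D1*D2. p i * (cmod (cinner (D1*D2) (tensor_vec D2 (f a) (g b)) (u i)))\<^sup>2) = be b"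
    using sum_cquad_product_eigenbasis(2)[OF of ef og eg] by (simp only: weight flip: Re_sum) simp
qed

text \<open>Klein's inequality in the product eigenbasis \<open>W\<close> of the two marginals: the weights
  \<open>q j = \<langle>W j, \<rho> W j\<rangle>\<close> arise from the spectrum of \<open>\<rho>\<close> through a doubly stochastic matrix, and the
  row and column sums of \<open>q\<close> are the spectra of the marginals.\<close>

theorem vN_entropy_subadditive:
  assumes d: "density_op (D1*D2) \<rho>"
  shows "vN_entropy \<rho> \<le> vN_entropy (partial_trace 1 D1 D2 \<rho>) + vN_entropy (partial_trace D1 D2 1 \<rho>)"
proof -
  let ?N = "D1*D2"
  let ?A = "partial_trace 1 D1 D2 \<rho>" and ?B = "partial_trace D1 D2 1 \<rho>"
  have R: "\<rho> \<in> carrier_mat ?N ?N" using d unfolding density_op_def by auto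
  obtain u p where ou: "orthonormal ?N ?N u" and eu: "eigenpairs ?N ?N \<rho> u p" and p0: "\<forall>i<?N. 0 \<le> p i"
    and p1: "(\<Sum>i<?N. p i) = 1" and Sr: "vN_entropy \<rho> = - (\<Sum>i<?N. p i * ln (p i))"
    using density_op_spectral[OF d] by blast
  obtain f al where of: "orthonormal D1 D1 f" and ef: "eigenpairs D1 D1 ?A f al" and al0: "\<forall>i<D1. 0 \<le> al i"
    and al1: "(\<Sum>i<D1. al i) = 1" and SA: "vN_entropy ?A = - (\<Sum>i<D1. al i * ln (al i))"
    using density_op_spectral[OF density_op_partial_trace_left[OF d]] by blast
  obtain g be where og: "orthonormal D2 D2 g" and eg: "eigenpairs D2 D2 ?B g be" and be0: "\<forall>i<D2. 0 \<le> be i"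
    and be1: "(\<Sum>i<D2. be i) = 1" and SB: "vN_entropy ?B = - (\<Sum>i<D2. be i * ln (be i))"
    using density_op_spectral[OF density_op_partial_trace_right[OF d]] by blast
  have D2: "D2 > 0" using be1 by (cases D2) auto
  have jdiv: "j div D2 < D1" "j mod D2 < D2" "j = j div D2 * D2 + j mod D2" if "j < ?N" for j
    using that D2 by (auto simp: less_mult_imp_div_less)
  define W where "W j = tensor_vec D2 (f (j div D2)) (g (j mod D2))" for j
  define c where "c i j = (cmod (cinner ?N (W j) (u i)))\<^sup>2" for i j
  define q where "q a b = (\<Sum>i<?N. p i * c i (a * D2 + b))" for a b
  define r where "r j = al (j div D2) * be (j mod D2)" for j
  have q0: "0 \<le> q a b" for a b unfolding q_def c_def using p0 by (intro sum_nonneg) auto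
  have W_index: "W (a * D2 + b) = tensor_vec D2 (f a) (g b)" if "b < D2" for a b
    unfolding W_def using that by simp
  have rows: "(\<Sum>b<D2. q a b) = al a" if "a < D1" for a
    using spectral_weights_product_eigenbasis(1)[OF R ou eu of ef og eg that] W_index
    unfolding q_def c_def by simp
  have cols: "(\<Sum>a<D1. q a b) = be b" if "b < D2" for b
    using spectral_weights_product_eigenbasis(2)[OF R ou eu of ef og eg that] W_index that
    unfolding q_def c_def by simp
  have supp: "0 < r j" if "i < ?N" "j < ?N" "0 < p i" "0 < c i j" for i j
  proof -
    have "0 < p i * c i j" using that by simp
    also have "p i * c i j \<le> (\<Sum>i<?N. p i * c i j)" using that p0
      by (intro member_le_sum[where f="\<lambda>i. p i * c i j"]) (auto simp: c_def)
    also have "\<dots> = q (j div D2) (j mod D2)" by (simp add: q_def)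
    finally show ?thesis
      unfolding r_def using marginals_pos[where q=q, OF q0 rows cols jdiv(1,2)[OF that(2)]] by simp
  qed
  have r1: "(\<Sum>j<?N. r j) = 1"
    unfolding sum_lessThan_mult r_def using al1 be1
    by (simp add: sum_distrib_left[symmetric] sum_distrib_right[symmetric])
  have "(\<Sum>i<?N. p i * (\<Sum>j<?N. c i j * ln (r j))) \<le> (\<Sum>i<?N. p i * ln (p i))"
    by (rule gibbs_inequality_mixing) (use p0 p1 r1 supp al0 be0 jdiv
        orthonormal_overlap_sums[OF ou orthonormal_tensor[OF of og]] in \<open>auto simp: c_def r_def W_def\<close>)
  also have "(\<Sum>i<?N. p i * (\<Sum>j<?N. c i j * ln (r j))) = (\<Sum>j<?N. (\<Sum>i<?N. p i * c i j) * ln (r j))"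
    by (simp add: sum_distrib_left sum_distrib_right mult.assoc) (rule sum.swap)
  also have "\<dots> = (\<Sum>a<D1. \<Sum>b<D2. (\<Sum>i<?N. p i * c i (a * D2 + b)) * ln (r (a * D2 + b)))"
    by (rule sum_lessThan_mult)
  also have "\<dots> = (\<Sum>a<D1. \<Sum>b<D2. q a b * ln (al a * be b))"
    by (intro sum.cong refl) (simp add: q_def r_def)
  also have "\<dots> = (\<Sum>a<D1. al a * ln (al a)) + (\<Sum>b<D2. be b * ln (be b))"
    by (rule sum_ln_product_marginals) (use q0 rows cols in auto)
  finally show ?thesis using Sr SA SB by simp
qed

section \<open>Purification and the Araki--Lieb inequality\<close>

lemma cinner_hermitian_eigenvector:
  assumes P: "P \<in> carrier_mat n n" and h: "hermitian_on n P" and e: "eigenpairs n n P v l" and k: "k < n"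
  shows "cinner n (v k) (\<lambda>c. \<Sum>a<n. P $$ (c,a) * w a) = of_real (l k) * cinner n (v k) w"
proof -
  have "of_real (l k) * cinner n (v k) w = (\<Sum>a<n. cnj (of_real (l k) * v k a) * w a)"
    unfolding cinner_def by (simp add: sum_distrib_left mult_ac)
  also have "\<dots> = (\<Sum>a<n. cnj (\<Sum>c<n. P $$ (a,c) * v k c) * w a)"
    using e k unfolding eigenpairs_def by (intro sum.cong refl) simp
  also have "\<dots> = (\<Sum>a<n. \<Sum>c<n. cnj (v k c) * (P $$ (c,a) * w a))"
  proof (intro sum.cong refl)
    fix a assume a: "a \<in> {..<n}"
    show "cnj (\<Sum>c<n. P $$ (a,c) * v k c) * w a = (\<Sum>c<n. cnj (v k c) * (P $$ (c,a) * w a))"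
      unfolding cnj_sum sum_distrib_right
    proof (intro sum.cong refl)
      fix c assume c: "c \<in> {..<n}"
      have "P $$ (c,a) = cnj (P $$ (a,c))" using hermitian_onD[OF h, of c a] a c by simp
      then show "cnj (P $$ (a,c) * v k c) * w a = cnj (v k c) * (P $$ (c,a) * w a)" by simp
    qed
  qed
  also have "\<dots> = cinner n (v k) (\<lambda>c. \<Sum>a<n. P $$ (c,a) * w a)"
    unfolding cinner_def by (subst sum.swap) (simp add: sum_distrib_left)
  finally show ?thesis by simp
qed

definition gram_left :: "nat \<Rightarrow> nat \<Rightarrow> (nat \<Rightarrow> nat \<Rightarrow> complex) \<Rightarrow> complex mat" where
  "gram_left D1 D2 M = mat D1 D1 (\<lambda>(a,c). \<Sum>y<D2. M a y * cnj (M c y))"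

definition gram_right :: "nat \<Rightarrow> nat \<Rightarrow> (nat \<Rightarrow> nat \<Rightarrow> complex) \<Rightarrow> complex mat" where
  "gram_right D1 D2 M = mat D2 D2 (\<lambda>(y,y'). \<Sum>a<D1. M a y * cnj (M a y'))"

lemma gram_left_carrier: "gram_left D1 D2 M \<in> carrier_mat D1 D1"
  and gram_right_carrier: "gram_right D1 D2 M \<in> carrier_mat D2 D2"
  unfolding gram_left_def gram_right_def by auto

lemma index_gram_left: "a < D1 \<Longrightarrow> c < D1 \<Longrightarrow> gram_left D1 D2 M $$ (a,c) = (\<Sum>y<D2. M a y * cnj (M c y))"
  and index_gram_right: "y < D2 \<Longrightarrow> y' < D2 \<Longrightarrow> gram_right D1 D2 M $$ (y,y') = (\<Sum>a<D1. M a y * cnj (M a y'))"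
  unfolding gram_left_def gram_right_def by auto

lemma hermitian_on_gram_left: "hermitian_on D1 (gram_left D1 D2 M)"
  and hermitian_on_gram_right: "hermitian_on D2 (gram_right D1 D2 M)"
  unfolding hermitian_on_def by (simp_all add: index_gram_left index_gram_right mult.commute)

lemma gram_left_mult_eigenvector:
  assumes eg: "eigenpairs D2 D2 (gram_right D1 D2 M) g be" and c: "c < D1" and b: "b < D2"
  shows "(\<Sum>a<D1. gram_left D1 D2 M $$ (c,a) * (\<Sum>y<D2. M a y * cnj (g b y)))
    = of_real (be b) * (\<Sum>y<D2. M c y * cnj (g b y))"
proof -
  have "(\<Sum>a<D1. gram_left D1 D2 M $$ (c,a) * (\<Sum>y<D2. M a y * cnj (g b y)))
      = (\<Sum>a<D1. \<Sum>y'<D2. \<Sum>y<D2. M c y' * (cnj (M a y') * M a y * cnj (g b y)))"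
    using c by (intro sum.cong refl) (simp add: index_gram_left sum_distrib_left sum_distrib_right mult_ac)
  also have "\<dots> = (\<Sum>y'<D2. M c y' * (\<Sum>y<D2. (\<Sum>a<D1. cnj (M a y') * M a y) * cnj (g b y)))"
    by (subst sum_swap3) (simp add: sum_distrib_left sum_distrib_right mult_ac)
  also have "\<dots> = (\<Sum>y'<D2. M c y' * cnj (\<Sum>y<D2. gram_right D1 D2 M $$ (y',y) * g b y))"
    by (intro sum.cong refl) (simp add: index_gram_right mult.commute)
  also have "\<dots> = (\<Sum>y'<D2. M c y' * (of_real (be b) * cnj (g b y')))"
    using eg b unfolding eigenpairs_def by (intro sum.cong refl) simp
  also have "\<dots> = of_real (be b) * (\<Sum>y<D2. M c y * cnj (g b y))" by (simp add: sum_distrib_left mult_ac)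
  finally show ?thesis .
qed

lemma gram_overlap_eigenvalues:
  assumes ev: "eigenpairs D1 D1 (gram_left D1 D2 M) v al" and eg: "eigenpairs D2 D2 (gram_right D1 D2 M) g be"
    and k: "k < D1" and b: "b < D2"
  shows "(al k - be b) * (cmod (cinner D1 (v k) (\<lambda>a. \<Sum>y<D2. M a y * cnj (g b y))))\<^sup>2 = 0"
proof -
  let ?Mh = "\<lambda>a. \<Sum>y<D2. M a y * cnj (g b y)"
  have "of_real (al k) * cinner D1 (v k) ?Mh = cinner D1 (v k) (\<lambda>c. \<Sum>a<D1. gram_left D1 D2 M $$ (c,a) * ?Mh a)"
    by (rule cinner_hermitian_eigenvector[OF gram_left_carrier hermitian_on_gram_left ev k, symmetric])
  also have "\<dots> = of_real (be b) * cinner D1 (v k) ?Mh"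
    unfolding cinner_def using gram_left_mult_eigenvector[OF eg _ b] by (simp add: sum_distrib_left mult_ac)
  finally have "(of_real (al k) - of_real (be b)) * cinner D1 (v k) ?Mh = 0" by (simp add: algebra_simps)
  then show ?thesis by auto
qed

lemma gram_overlap_rows:
  assumes ov: "orthonormal D1 D1 v" and ev: "eigenpairs D1 D1 (gram_left D1 D2 M) v al"
    and og: "orthonormal D2 D2 g" and k: "k < D1"
  shows "(\<Sum>b<D2. (cmod (cinner D1 (v k) (\<lambda>a. \<Sum>y<D2. M a y * cnj (g b y))))\<^sup>2) = al k"
proof -
  define Z where "Z y = (\<Sum>a<D1. cnj (v k a) * M a y)" for y
  have "cinner D1 (v k) (\<lambda>a. \<Sum>y<D2. M a y * cnj (g b y)) = cinner D2 (g b) Z" for b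
    unfolding cinner_def Z_def
    by (simp add: sum_distrib_left sum_distrib_right mult_ac) (rule sum.swap)
  then have "(\<Sum>b<D2. (cmod (cinner D1 (v k) (\<lambda>a. \<Sum>y<D2. M a y * cnj (g b y))))\<^sup>2) = (\<Sum>y<D2. (cmod (Z y))\<^sup>2)"
    using parseval[OF og] by simp
  also have "complex_of_real \<dots> = cinner D2 Z Z" by (rule cinner_self[symmetric])
  also have "\<dots> = (\<Sum>c<D1. \<Sum>a<D1. \<Sum>y<D2. cnj (v k c) * (M c y * cnj (M a y) * v k a))"
    unfolding cinner_def Z_def
    by (simp add: sum_distrib_left sum_distrib_right mult_ac) (subst sum.swap, subst sum_swap3, rule refl)
  also have "\<dots> = cquad D1 (gram_left D1 D2 M) (v k)"
    unfolding cquad_def by (intro sum.cong refl) (simp add: index_gram_left sum_distrib_left sum_distrib_right mult_ac)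
  also have "\<dots> = of_real (al k)" by (rule cquad_eigenvector[OF ov ev k])
  finally show ?thesis by (simp only: of_real_eq_iff)
qed

lemma gram_overlap_cols:
  assumes ov: "orthonormal D1 D1 v" and og: "orthonormal D2 D2 g"
    and eg: "eigenpairs D2 D2 (gram_right D1 D2 M) g be" and b: "b < D2"
  shows "(\<Sum>k<D1. (cmod (cinner D1 (v k) (\<lambda>a. \<Sum>y<D2. M a y * cnj (g b y))))\<^sup>2) = be b"
proof -
  let ?Mh = "\<lambda>a. \<Sum>y<D2. M a y * cnj (g b y)"
  have "(\<Sum>k<D1. (cmod (cinner D1 (v k) ?Mh))\<^sup>2) = (\<Sum>a<D1. (cmod (?Mh a))\<^sup>2)"
    by (rule parseval[OF ov])
  also have "complex_of_real \<dots> = cinner D1 ?Mh ?Mh" by (rule cinner_self[symmetric])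
  also have "\<dots> = (\<Sum>y<D2. \<Sum>y'<D2. \<Sum>a<D1. g b y * (cnj (M a y) * M a y' * cnj (g b y')))"
    unfolding cinner_def by (simp add: sum_distrib_left sum_distrib_right mult_ac) (rule sum_swap3)
  also have "\<dots> = cnj (cquad D2 (gram_right D1 D2 M) (g b))"
    unfolding cquad_def cnj_sum
    by (intro sum.cong refl) (simp add: index_gram_right sum_distrib_left sum_distrib_right mult_ac)
  also have "\<dots> = of_real (be b)" using cquad_eigenvector[OF og eg b] by simp
  finally show ?thesis by (simp only: of_real_eq_iff)
qed

lemma sum_mult_ln_coupling:
  fixes w :: "nat \<Rightarrow> nat \<Rightarrow> real"
  assumes eq: "\<And>k b. k < D1 \<Longrightarrow> b < D2 \<Longrightarrow> (al k - be b) * w k b = 0"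
    and rows: "\<And>k. k < D1 \<Longrightarrow> (\<Sum>b<D2. w k b) = al k"
    and cols: "\<And>b. b < D2 \<Longrightarrow> (\<Sum>k<D1. w k b) = be b"
  shows "(\<Sum>k<D1. al k * ln (al k)) = (\<Sum>b<D2. be b * ln (be b))"
proof -
  have "(\<Sum>k<D1. al k * ln (al k)) = (\<Sum>k<D1. \<Sum>b<D2. w k b * ln (al k))"
    using rows by (simp add: sum_distrib_right[symmetric])
  also have "\<dots> = (\<Sum>k<D1. \<Sum>b<D2. w k b * ln (be b))"
    using eq by (intro sum.cong refl) (metis lessThan_iff mult_eq_0_iff right_minus_eq)
  also have "\<dots> = (\<Sum>b<D2. be b * ln (be b))"
    using cols by (subst sum.swap) (simp add: sum_distrib_right[symmetric])
  finally show ?thesis .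
qed

text \<open>The two reduced states of a pure state have the same nonzero spectrum (Schmidt decomposition).\<close>

lemma vN_entropy_gram_eq: "vN_entropy (gram_left D1 D2 M) = vN_entropy (gram_right D1 D2 M)"
proof -
  obtain v al where ov: "orthonormal D1 D1 v" and ev: "eigenpairs D1 D1 (gram_left D1 D2 M) v al"
    using hermitian_on_spectral[OF gram_left_carrier hermitian_on_gram_left] by blast
  obtain g be where og: "orthonormal D2 D2 g" and eg: "eigenpairs D2 D2 (gram_right D1 D2 M) g be"
    using hermitian_on_spectral[OF gram_right_carrier hermitian_on_gram_right] by blast
  have "(\<Sum>k<D1. al k * ln (al k)) = (\<Sum>b<D2. be b * ln (be b))"
    by (rule sum_mult_ln_coupling[OF gram_overlap_eigenvalues[OF ev eg] gram_overlap_rows[OF ov ev og]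
          gram_overlap_cols[OF ov og eg]])
  then show ?thesis
    using vN_entropy_eigenpairs[OF gram_left_carrier ov ev] vN_entropy_eigenpairs[OF gram_right_carrier og eg]
    by simp
qed

definition pure_state :: "nat \<Rightarrow> (nat \<Rightarrow> complex) \<Rightarrow> complex mat" where
  "pure_state K \<psi> = mat K K (\<lambda>(s,t). \<psi> s * cnj (\<psi> t))"

lemma partial_trace_pure_state:
  assumes "E * D * F = K" "a < D" "b < D"
  shows "partial_trace E D F (pure_state K \<psi>) $$ (a,b) = (\<Sum>x<E. \<Sum>z<F. \<psi> (x*(D*F) + a*F + z) * cnj (\<psi> (x*(D*F) + b*F + z)))"
  using assms mult_add_less_mult3[of _ E _ D _ F] by (simp add: partial_trace_index pure_state_def)

lemma vN_entropy_pure_marginals: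
  "vN_entropy (partial_trace 1 D1 D2 (pure_state (D1*D2) \<psi>)) = vN_entropy (partial_trace D1 D2 1 (pure_state (D1*D2) \<psi>))"
proof -
  define M where "M a y = \<psi> (a*D2 + y)" for a y
  have "partial_trace 1 D1 D2 (pure_state (D1*D2) \<psi>) = gram_left D1 D2 M"
    by (rule eq_matI) (auto simp: partial_trace_pure_state M_def gram_left_def)
  moreover have "partial_trace D1 D2 1 (pure_state (D1*D2) \<psi>) = gram_right D1 D2 M"
    by (rule eq_matI) (auto simp: partial_trace_pure_state M_def gram_right_def)
  ultimately show ?thesis using vN_entropy_gram_eq by simp
qed

lemma density_op_pure_state:
  assumes n: "(\<Sum>s<K. (cmod (\<psi> s))\<^sup>2) = 1"
  shows "density_op K (pure_state K \<psi>)"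
proof -
  have C: "pure_state K \<psi> \<in> carrier_mat K K" unfolding pure_state_def by simp
  have h: "hermitian_on K (pure_state K \<psi>)" unfolding hermitian_on_def pure_state_def by simp
  have p: "psd (pure_state K \<psi>)"
  proof (rule psdI[OF C])
    fix x :: "nat \<Rightarrow> complex"
    have "(\<Sum>a<K. cnj (x a) * (\<Sum>b<K. pure_state K \<psi> $$ (a,b) * x b)) = cnj (cinner K \<psi> x) * cinner K \<psi> x"
      unfolding pure_state_def cinner_def apply (simp add: sum_distrib_left sum_distrib_right mult_ac)
      by (rule sum.swap)
    also have "\<dots> = of_real ((cmod (cinner K \<psi> x))\<^sup>2)" by (rule cnj_mult_self)
    finally show "0 \<le> Re (\<Sum>a<K. cnj (x a) * (\<Sum>b<K. pure_state K \<psi> $$ (a,b) * x b))" by simp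
  qed
  have t: "mtrace (pure_state K \<psi>) = 1"
  proof -
    have "mtrace (pure_state K \<psi>) = (\<Sum>s<K. of_real ((cmod (\<psi> s))\<^sup>2))"
      unfolding mtrace_def
    proof (intro sum.cong)
      show "{..<dim_row (pure_state K \<psi>)} = {..<K}" unfolding pure_state_def by simp
      fix s assume "s \<in> {..<K}"
      then have "pure_state K \<psi> $$ (s,s) = \<psi> s * cnj (\<psi> s)" unfolding pure_state_def by simp
      then show "pure_state K \<psi> $$ (s,s) = of_real ((cmod (\<psi> s))\<^sup>2)" by (simp only: complex_norm_square)
    qed
    also have "\<dots> = 1" using n by (simp only: of_real_sum[symmetric]) simp
    finally show ?thesis .
  qed
  show ?thesis unfolding density_op_def using C h p t hermitian_iff_hermitian_on[OF C] by simp
qed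

lemma vN_entropy_diagonal:
  assumes "\<And>i j. i < n \<Longrightarrow> j < n \<Longrightarrow> A $$ (i,j) = (if i = j then of_real (p i) else 0)"
    and "A \<in> carrier_mat n n"
  shows "vN_entropy A = - (\<Sum>i<n. p i * ln (p i))"
proof (rule vN_entropy_eigenpairs[OF assms(2)])
  show "orthonormal n n (\<lambda>i x. if i = x then 1 else 0)" unfolding orthonormal_def by (simp add: if_distrib sum.delta cong: if_cong)
  show "eigenpairs n n A (\<lambda>i x. if i = x then 1 else 0) p" unfolding eigenpairs_def using assms(1)
    by (simp add: if_one_zero_mult sum.delta')
qed


lemma sqrt_mult_cnj: "0 \<le> x \<Longrightarrow> complex_of_real (sqrt x) * cnj (complex_of_real (sqrt x)) = of_real x"
  by (simp flip: of_real_mult)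

text \<open>The standard purification \<open>\<Sum>\<^sub>i \<surd>p\<^sub>i u\<^sub>i \<otimes> |i\<rangle>\<close> of \<open>\<rho> = \<Sum>\<^sub>i p\<^sub>i |u\<^sub>i\<rangle>\<langle>u\<^sub>i|\<close>.\<close>

definition purification_vec :: "nat \<Rightarrow> (nat \<Rightarrow> nat \<Rightarrow> complex) \<Rightarrow> (nat \<Rightarrow> real) \<Rightarrow> nat \<Rightarrow> complex" where
  "purification_vec N u p s = complex_of_real (sqrt (p (s mod N))) * u (s mod N) (s div N)"

lemma purification_vec_index:
  "i < N \<Longrightarrow> purification_vec N u p (t*N + i) = complex_of_real (sqrt (p i)) * u i t"
  unfolding purification_vec_def by simp

lemma purification_vec_norm:
  assumes ou: "orthonormal N N u" and p0: "\<forall>i<N. 0 \<le> p i"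
  shows "(\<Sum>s<N*N. (cmod (purification_vec N u p s))\<^sup>2) = (\<Sum>i<N. p i)"
proof -
  have "(\<Sum>s<N*N. (cmod (purification_vec N u p s))\<^sup>2) = (\<Sum>t<N. \<Sum>i<N. p i * (cmod (u i t))\<^sup>2)"
    unfolding sum_lessThan_mult using p0
    by (intro sum.cong refl) (simp add: purification_vec_index norm_mult power_mult_distrib)
  also have "\<dots> = (\<Sum>i<N. p i * (\<Sum>t<N. (cmod (u i t))\<^sup>2))"
    by (subst sum.swap) (simp add: sum_distrib_left)
  also have "\<dots> = (\<Sum>i<N. p i)" using orthonormal_norm[OF ou] by simp
  finally show ?thesis .
qed

lemma partial_trace_purification_left:
  assumes R: "\<rho> \<in> carrier_mat N N" and ou: "orthonormal N N u" and eu: "eigenpairs N N \<rho> u p"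
    and p0: "\<forall>i<N. 0 \<le> p i"
  shows "partial_trace 1 N N (pure_state (N*N) (purification_vec N u p)) = \<rho>"
proof (rule eq_matI)
  fix t t' assume "t < dim_row \<rho>" "t' < dim_col \<rho>"
  then have t: "t < N" and t': "t' < N" using R by auto
  let ?\<psi> = "purification_vec N u p"
  have "partial_trace 1 N N (pure_state (N*N) ?\<psi>) $$ (t,t') = (\<Sum>z<N. ?\<psi> (t*N + z) * cnj (?\<psi> (t'*N + z)))"
    using t t' by (simp add: partial_trace_pure_state)
  also have "\<dots> = (\<Sum>z<N. of_real (p z) * u z t * cnj (u z t'))"
  proof (intro sum.cong refl)
    fix z assume "z \<in> {..<N}"
    then have z: "z < N" and pz: "0 \<le> p z" using p0 by auto
    have "?\<psi> (t*N + z) * cnj (?\<psi> (t'*N + z)) = (of_real (sqrt (p z)) * cnj (of_real (sqrt (p z)))) * u z t * cnj (u z t')"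
      unfolding purification_vec_index[OF z] by (simp add: mult_ac)
    then show "?\<psi> (t*N + z) * cnj (?\<psi> (t'*N + z)) = of_real (p z) * u z t * cnj (u z t')"
      by (simp only: sqrt_mult_cnj[OF pz])
  qed
  also have "\<dots> = \<rho> $$ (t,t')" using eigenpairs_expansion[OF R ou eu t t'] by simp
  finally show "partial_trace 1 N N (pure_state (N*N) ?\<psi>) $$ (t,t') = \<rho> $$ (t,t')" .
qed (use R in auto)

lemma partial_trace_purification_right:
  assumes ou: "orthonormal N N u" and p0: "\<forall>i<N. 0 \<le> p i" and i: "i < N" and j: "j < N"
  shows "partial_trace N N 1 (pure_state (N*N) (purification_vec N u p)) $$ (i,j) = (if i = j then of_real (p i) else 0)"
proof -
  let ?\<psi> = "purification_vec N u p"
  have "partial_trace N N 1 (pure_state (N*N) ?\<psi>) $$ (i,j) = (\<Sum>t<N. ?\<psi> (t*N + i) * cnj (?\<psi> (t*N + j)))"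
    using i j by (simp add: partial_trace_pure_state)
  also have "\<dots> = of_real (sqrt (p i)) * cnj (of_real (sqrt (p j))) * cinner N (u j) (u i)"
    unfolding cinner_def using i j by (simp add: purification_vec_index sum_distrib_left mult_ac)
  also have "\<dots> = (if i = j then of_real (p i) else 0)"
    using orthonormal_cinner[OF ou j i] sqrt_mult_cnj[of "p j"] p0 j by auto
  finally show ?thesis .
qed

lemma purification:
  assumes d: "density_op N \<rho>"
  obtains \<psi> where "(\<Sum>s<N*N. (cmod (\<psi> s))\<^sup>2) = 1"
    "partial_trace 1 N N (pure_state (N*N) \<psi>) = \<rho>"
    "vN_entropy (partial_trace N N 1 (pure_state (N*N) \<psi>)) = vN_entropy \<rho>"
proof -
  have R: "\<rho> \<in> carrier_mat N N" using d unfolding density_op_def by auto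
  obtain u p where ou: "orthonormal N N u" and eu: "eigenpairs N N \<rho> u p" and p0: "\<forall>i<N. 0 \<le> p i"
    and p1: "(\<Sum>i<N. p i) = 1" and Sr: "vN_entropy \<rho> = - (\<Sum>i<N. p i * ln (p i))"
    using density_op_spectral[OF d] by blast
  have "vN_entropy (partial_trace N N 1 (pure_state (N*N) (purification_vec N u p))) = vN_entropy \<rho>"
    unfolding Sr by (rule vN_entropy_diagonal[OF partial_trace_purification_right[OF ou p0]]) simp_all
  with that show ?thesis
    using purification_vec_norm[OF ou p0] p1 partial_trace_purification_left[OF R ou eu p0] by simp
qed

lemma pure_state_swap:
  fixes \<psi> :: "nat \<Rightarrow> complex" and N :: nat
  defines "\<psi>' \<equiv> \<lambda>s. \<psi> (s mod N * N + s div N)"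
  shows "partial_trace 1 N N (pure_state (N*N) \<psi>') = partial_trace N N 1 (pure_state (N*N) \<psi>)"
    and "partial_trace N N 1 (pure_state (N*N) \<psi>') = partial_trace 1 N N (pure_state (N*N) \<psi>)"
    and "(\<Sum>s<N*N. (cmod (\<psi>' s))\<^sup>2) = (\<Sum>s<N*N. (cmod (\<psi> s))\<^sup>2)"
proof -
  have swap: "\<psi>' (a*N + z) = \<psi> (z*N + a)" if "z < N" for a z
    unfolding \<psi>'_def using that by simp
  show "partial_trace 1 N N (pure_state (N*N) \<psi>') = partial_trace N N 1 (pure_state (N*N) \<psi>)"
  proof (rule eq_matI)
    fix a b assume "a < dim_row (partial_trace N N 1 (pure_state (N*N) \<psi>))"
      "b < dim_col (partial_trace N N 1 (pure_state (N*N) \<psi>))"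
    then have ab: "a < N" "b < N" by simp_all
    have "partial_trace 1 N N (pure_state (N*N) \<psi>') $$ (a,b) = (\<Sum>z<N. \<psi>' (a*N + z) * cnj (\<psi>' (b*N + z)))"
      using ab by (simp add: partial_trace_pure_state)
    also have "\<dots> = (\<Sum>z<N. \<psi> (z*N + a) * cnj (\<psi> (z*N + b)))"
      using swap by (intro sum.cong refl) simp
    also have "\<dots> = partial_trace N N 1 (pure_state (N*N) \<psi>) $$ (a,b)"
      using ab by (simp add: partial_trace_pure_state)
    finally show "partial_trace 1 N N (pure_state (N*N) \<psi>') $$ (a,b) = partial_trace N N 1 (pure_state (N*N) \<psi>) $$ (a,b)" .
  qed simp_all
  show "partial_trace N N 1 (pure_state (N*N) \<psi>') = partial_trace 1 N N (pure_state (N*N) \<psi>)"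
  proof (rule eq_matI)
    fix a b assume "a < dim_row (partial_trace 1 N N (pure_state (N*N) \<psi>))"
      "b < dim_col (partial_trace 1 N N (pure_state (N*N) \<psi>))"
    then have ab: "a < N" "b < N" by simp_all
    have "partial_trace N N 1 (pure_state (N*N) \<psi>') $$ (a,b) = (\<Sum>x<N. \<psi>' (x*N + a) * cnj (\<psi>' (x*N + b)))"
      using ab by (simp add: partial_trace_pure_state)
    also have "\<dots> = (\<Sum>x<N. \<psi> (a*N + x) * cnj (\<psi> (b*N + x)))"
      using swap ab by simp
    also have "\<dots> = partial_trace 1 N N (pure_state (N*N) \<psi>) $$ (a,b)"
      using ab by (simp add: partial_trace_pure_state)
    finally show "partial_trace N N 1 (pure_state (N*N) \<psi>') $$ (a,b) = partial_trace 1 N N (pure_state (N*N) \<psi>) $$ (a,b)" .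
  qed simp_all
  have "(\<Sum>s<N*N. (cmod (\<psi>' s))\<^sup>2) = (\<Sum>a<N. \<Sum>z<N. (cmod (\<psi> (z*N + a)))\<^sup>2)"
    unfolding sum_lessThan_mult using swap by simp
  also have "\<dots> = (\<Sum>s<N*N. (cmod (\<psi> s))\<^sup>2)"
    unfolding sum_lessThan_mult by (rule sum.swap)
  finally show "(\<Sum>s<N*N. (cmod (\<psi>' s))\<^sup>2) = (\<Sum>s<N*N. (cmod (\<psi> s))\<^sup>2)" .
qed

text \<open>Both Araki--Lieb inequalities follow from subadditivity applied to a purification \<open>\<Psi>\<close> of \<open>\<rho>\<close>
  on \<open>A B R\<close>, using that complementary marginals of \<open>\<Psi>\<close> have equal entropy; for the left one the
  reference system \<open>R\<close> is placed last, for the right one first.\<close>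

lemma vN_entropy_araki_lieb_left:
  assumes d: "density_op (D1*D2) \<rho>"
  shows "vN_entropy (partial_trace 1 D1 D2 \<rho>) \<le> vN_entropy \<rho> + vN_entropy (partial_trace D1 D2 1 \<rho>)"
proof -
  define N where "N = D1*D2"
  obtain \<psi> where norm: "(\<Sum>s<N*N. (cmod (\<psi> s))\<^sup>2) = 1" and sys: "partial_trace 1 N N (pure_state (N*N) \<psi>) = \<rho>"
    and ref: "vN_entropy (partial_trace N N 1 (pure_state (N*N) \<psi>)) = vN_entropy \<rho>"
    using purification[of N \<rho>] d unfolding N_def by blast
  have K: "N*N = D1*(D2*N)" unfolding N_def by (simp add: mult_ac)
  define \<Psi> where "\<Psi> = pure_state (N*N) \<psi>"
  have dPsi: "density_op (D1*(D2*N)) \<Psi>" unfolding \<Psi>_def K[symmetric] by (rule density_op_pure_state[OF norm])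
  have pure: "vN_entropy (partial_trace 1 D1 (D2*N) \<Psi>) = vN_entropy (partial_trace D1 (D2*N) 1 \<Psi>)"
    unfolding \<Psi>_def K by (rule vN_entropy_pure_marginals)
  have margA: "partial_trace 1 D1 (D2*N) \<Psi> = partial_trace 1 D1 D2 \<rho>"
    using partial_trace_partial_trace[of 1 D1 D2 1 N \<Psi>] sys unfolding \<Psi>_def N_def by simp
  define BC where "BC = partial_trace D1 (D2*N) 1 \<Psi>"
  have subadd: "vN_entropy BC \<le> vN_entropy (partial_trace 1 D2 N BC) + vN_entropy (partial_trace D2 N 1 BC)"
    unfolding BC_def by (rule vN_entropy_subadditive) (use density_op_partial_trace[of D1 "D2*N" 1 \<Psi>] dPsi in simp)
  have "partial_trace 1 D2 N BC = partial_trace D1 D2 N \<Psi>"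
    unfolding BC_def using partial_trace_partial_trace[of 1 D2 N D1 1 \<Psi>] by (simp add: mult_ac)
  also have "\<dots> = partial_trace D1 D2 1 \<rho>"
    using partial_trace_partial_trace[of D1 D2 1 1 N \<Psi>] sys unfolding \<Psi>_def N_def by (simp add: mult_ac)
  finally have margB: "partial_trace 1 D2 N BC = partial_trace D1 D2 1 \<rho>" .
  have margR: "partial_trace D2 N 1 BC = partial_trace N N 1 \<Psi>"
    unfolding BC_def using partial_trace_partial_trace[of D2 N 1 D1 1 \<Psi>] unfolding N_def by (simp add: mult_ac)
  show ?thesis using pure margA subadd margB margR ref unfolding BC_def \<Psi>_def by simp
qed

lemma vN_entropy_araki_lieb_right:
  assumes d: "density_op (D1*D2) \<rho>"
  shows "vN_entropy (partial_trace D1 D2 1 \<rho>) \<le> vN_entropy \<rho> + vN_entropy (partial_trace 1 D1 D2 \<rho>)"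
proof -
  define N where "N = D1*D2"
  obtain \<psi>0 where norm0: "(\<Sum>s<N*N. (cmod (\<psi>0 s))\<^sup>2) = 1" and sys0: "partial_trace 1 N N (pure_state (N*N) \<psi>0) = \<rho>"
    and ref0: "vN_entropy (partial_trace N N 1 (pure_state (N*N) \<psi>0)) = vN_entropy \<rho>"
    using purification[of N \<rho>] d unfolding N_def by blast
  define \<psi> where "\<psi> s = \<psi>0 (s mod N * N + s div N)" for s
  have norm: "(\<Sum>s<N*N. (cmod (\<psi> s))\<^sup>2) = 1" and sys: "partial_trace N N 1 (pure_state (N*N) \<psi>) = \<rho>"
    and ref: "vN_entropy (partial_trace 1 N N (pure_state (N*N) \<psi>)) = vN_entropy \<rho>"
    using pure_state_swap[where \<psi>=\<psi>0 and N=N] norm0 sys0 ref0 unfolding \<psi>_def by simp_all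
  have K: "N*N = N*D1*D2" unfolding N_def by (simp add: mult_ac)
  define \<Psi> where "\<Psi> = pure_state (N*N) \<psi>"
  have dPsi: "density_op (N*D1*D2) \<Psi>" unfolding \<Psi>_def K[symmetric] by (rule density_op_pure_state[OF norm])
  have pure: "vN_entropy (partial_trace 1 (N*D1) D2 \<Psi>) = vN_entropy (partial_trace (N*D1) D2 1 \<Psi>)"
    unfolding \<Psi>_def K by (rule vN_entropy_pure_marginals)
  have margB: "partial_trace (N*D1) D2 1 \<Psi> = partial_trace D1 D2 1 \<rho>"
    using partial_trace_partial_trace[of D1 D2 1 N 1 \<Psi>] sys unfolding \<Psi>_def N_def by (simp add: mult_ac)
  define CA where "CA = partial_trace 1 (N*D1) D2 \<Psi>"
  have subadd: "vN_entropy CA \<le> vN_entropy (partial_trace 1 N D1 CA) + vN_entropy (partial_trace N D1 1 CA)"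
    unfolding CA_def by (rule vN_entropy_subadditive) (use density_op_partial_trace[of 1 "N*D1" D2 \<Psi>] dPsi in simp)
  have "partial_trace N D1 1 CA = partial_trace N D1 D2 \<Psi>"
    unfolding CA_def using partial_trace_partial_trace[of N D1 1 1 D2 \<Psi>] by (simp add: mult_ac)
  also have "\<dots> = partial_trace 1 D1 D2 \<rho>"
    using partial_trace_partial_trace[of 1 D1 D2 N 1 \<Psi>] sys unfolding \<Psi>_def N_def by (simp add: mult_ac)
  finally have margA: "partial_trace N D1 1 CA = partial_trace 1 D1 D2 \<rho>" .
  have margR: "partial_trace 1 N D1 CA = partial_trace 1 N N \<Psi>"
    unfolding CA_def using partial_trace_partial_trace[of 1 N D1 1 D2 \<Psi>] unfolding N_def by (simp add: mult_ac)
  show ?thesis using pure margB subadd margA margR ref unfolding CA_def \<Psi>_def by simp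
qed

lemma vN_entropy_le_ln_dim:
  assumes "density_op n A"
  shows "vN_entropy A \<le> ln (real n)"
proof -
  obtain v l where "\<forall>i<n. 0 \<le> l i" "(\<Sum>i<n. l i) = 1" "vN_entropy A = - (\<Sum>i<n. l i * ln (l i))"
    using density_op_spectral[OF assms] by blast
  then show ?thesis using entropy_le_ln_card[of n l] by simp
qed

lemma vN_entropy_1x1:
  assumes A: "A \<in> carrier_mat 1 1" and a: "A $$ (0,0) = 1"
  shows "vN_entropy A = 0"
proof -
  have o: "orthonormal 1 1 (\<lambda>i x. 1)" unfolding orthonormal_def by simp
  have e: "eigenpairs 1 1 A (\<lambda>i x. 1) (\<lambda>i. 1)" unfolding eigenpairs_def using a by simp
  show ?thesis using vN_entropy_eigenpairs[OF A o e] by simp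
qed

lemma eigenpairs_tensor_maximally_mixed:
  assumes ev: "eigenpairs D D \<sigma> v l" and dpos: "d > 0"
    and ent: "\<And>a b. a < D*d \<Longrightarrow> b < D*d \<Longrightarrow>
       \<rho> $$ (a,b) = \<sigma> $$ (a div d, b div d) * (if a mod d = b mod d then 1 / of_nat d else 0)"
  shows "eigenpairs (D*d) (D*d) \<rho> (\<lambda>j. tensor_vec d (v (j div d)) (\<lambda>y. if j mod d = y then 1 else 0))
    (\<lambda>j. l (j div d) / real d)"
  unfolding eigenpairs_def
proof (intro allI impI)
  fix j x assume j: "j < D*d" and x: "x < D*d"
  let ?e = "\<lambda>y. if j mod d = y then 1 else 0 :: complex"
  have jd: "j div d < D" and xd: "x div d < D" "x mod d < d"
    using j x dpos by (auto simp: less_mult_imp_div_less)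
  have "(\<Sum>y<D*d. \<rho> $$ (x,y) * tensor_vec d (v (j div d)) ?e y)
      = (\<Sum>y1<D. \<Sum>y2<d. \<sigma> $$ (x div d, y1) * v (j div d) y1 * ((if x mod d = y2 then 1 / of_nat d else 0) * ?e y2))"
    unfolding sum_lessThan_mult
  proof (intro sum.cong refl)
    fix y1 y2 assume "y1 \<in> {..<D}" "y2 \<in> {..<d}"
    then have y: "y1 < D" "y2 < d" by auto
    then show "\<rho> $$ (x, y1*d+y2) * tensor_vec d (v (j div d)) ?e (y1*d+y2)
        = \<sigma> $$ (x div d, y1) * v (j div d) y1 * ((if x mod d = y2 then 1 / of_nat d else 0) * ?e y2)"
      using x mult_add_less_mult[OF y] by (simp add: ent tensor_vec_index)
  qed
  also have "\<dots> = (\<Sum>y1<D. \<sigma> $$ (x div d, y1) * v (j div d) y1) * (?e (x mod d) / of_nat d)"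
    using xd by (simp add: sum_product[symmetric] if_distrib sum.delta sum_divide_distrib cong: if_cong)
  also have "\<dots> = of_real (l (j div d)) * v (j div d) (x div d) * (?e (x mod d) / of_nat d)"
    using ev jd xd unfolding eigenpairs_def by simp
  finally show "(\<Sum>y<D*d. \<rho> $$ (x,y) * tensor_vec d (v (j div d)) ?e y)
      = of_real (l (j div d) / real d) * tensor_vec d (v (j div d)) ?e x"
    unfolding tensor_vec_def by simp
qed

text \<open>The entrywise form of \<open>\<rho> = \<sigma> \<otimes> \<one>/d\<close>, as in the definition of \<open>time_ordered\<close>.\<close>

lemma vN_entropy_tensor_maximally_mixed:
  assumes sd: "density_op D \<sigma>" and dpos: "d > 0"
    and R: "\<rho> \<in> carrier_mat (D*d) (D*d)"
    and ent: "\<And>a b. a < D*d \<Longrightarrow> b < D*d \<Longrightarrow>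
       \<rho> $$ (a,b) = \<sigma> $$ (a div d, b div d) * (if a mod d = b mod d then 1 / of_nat d else 0)"
  shows "vN_entropy \<rho> = vN_entropy \<sigma> + ln (real d)"
proof -
  obtain v l where ov: "orthonormal D D v" and ev: "eigenpairs D D \<sigma> v l" and l0: "\<forall>i<D. 0 \<le> l i"
    and l1: "(\<Sum>i<D. l i) = 1" and Ss: "vN_entropy \<sigma> = - (\<Sum>i<D. l i * ln (l i))"
    using density_op_spectral[OF sd] by blast
  have oe: "orthonormal d d (\<lambda>c x. if c = x then 1 else 0)"
    unfolding orthonormal_def by (simp add: if_one_zero_mult sum.delta)
  have "vN_entropy \<rho> = - (\<Sum>j<D*d. l (j div d) / real d * ln (l (j div d) / real d))"
    by (rule vN_entropy_eigenpairs[OF R orthonormal_tensor[OF ov oe]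
          eigenpairs_tensor_maximally_mixed[OF ev dpos ent]])
  also have "(\<Sum>j<D*d. l (j div d) / real d * ln (l (j div d) / real d)) = (\<Sum>i<D. l i * ln (l i) - l i * ln (real d))"
    unfolding sum_lessThan_mult
  proof (intro sum.cong refl)
    fix i assume i: "i \<in> {..<D}"
    show "(\<Sum>c<d. l ((i*d + c) div d) / real d * ln (l ((i*d + c) div d) / real d)) = l i * ln (l i) - l i * ln (real d)"
    proof (cases "l i = 0")
      case False
      then have "0 < l i" using l0 i by (simp add: less_le)
      then show ?thesis using dpos by (simp add: ln_div algebra_simps)
    qed simp
  qed
  also have "\<dots> = (\<Sum>i<D. l i * ln (l i)) - ln (real d)"
    using l1 by (simp add: sum_subtractf sum_distrib_right[symmetric])
  finally show ?thesis using Ss by simp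
qed

section \<open>Entropies of contiguous blocks of qudits\<close>

definition block :: "nat \<Rightarrow> nat \<Rightarrow> complex mat \<Rightarrow> nat \<Rightarrow> nat \<Rightarrow> complex mat" where
  "block d N U p q = partial_trace (d ^ p) (d ^ q) (d ^ (N - p - q)) U"

lemma density_op_block:
  assumes "density_op (d ^ N) U" "p + q \<le> N"
  shows "density_op (d ^ q) (block d N U p q)"
proof -
  have "d ^ p * d ^ q * d ^ (N - p - q) = d ^ N"
    using assms(2) by (simp flip: power_add)
  then show ?thesis unfolding block_def using density_op_partial_trace[of "d ^ p" "d ^ q" "d ^ (N - p - q)" U] assms(1) by simp
qed

lemma partial_trace_block_left:
  assumes "p + q1 + q2 \<le> N"
  shows "partial_trace 1 (d ^ q1) (d ^ q2) (block d N U p (q1 + q2)) = block d N U p q1"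
proof -
  have e1: "1 * d ^ q1 * d ^ q2 = d ^ (q1 + q2)" by (simp add: power_add)
  have e2: "d ^ q2 * d ^ (N - p - (q1 + q2)) = d ^ (N - p - q1)"
    using assms by (simp flip: power_add)
  show ?thesis unfolding block_def using partial_trace_partial_trace[of 1 "d ^ q1" "d ^ q2" "d ^ p" "d ^ (N - p - (q1 + q2))" U]
    unfolding e1 e2 by simp
qed

lemma partial_trace_block_right:
  assumes "p + q1 + q2 \<le> N"
  shows "partial_trace (d ^ q1) (d ^ q2) 1 (block d N U p (q1 + q2)) = block d N U (p + q1) q2"
proof -
  have e1: "d ^ q1 * d ^ q2 * 1 = d ^ (q1 + q2)" by (simp add: power_add)
  have e2: "d ^ p * d ^ q1 = d ^ (p + q1)" by (simp add: power_add)
  have e3: "N - p - (q1 + q2) = N - (p + q1) - q2" by simp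
  show ?thesis unfolding block_def using partial_trace_partial_trace[of "d ^ q1" "d ^ q2" 1 "d ^ p" "d ^ (N - p - (q1 + q2))" U]
    unfolding e1 e2 e3 by simp
qed

lemma density_op_block_split:
  assumes "density_op (d ^ N) U" "p + q1 + q2 \<le> N"
  shows "density_op (d ^ q1 * d ^ q2) (block d N U p (q1 + q2))"
  using density_op_block[OF assms(1), of p "q1 + q2"] assms(2) by (simp add: power_add add.assoc)

lemma block_subadditive:
  assumes "density_op (d ^ N) U" "p + q1 + q2 \<le> N"
  shows "vN_entropy (block d N U p (q1 + q2)) \<le> vN_entropy (block d N U p q1) + vN_entropy (block d N U (p + q1) q2)"
  using vN_entropy_subadditive[OF density_op_block_split[OF assms]] partial_trace_block_left[OF assms(2)] partial_trace_block_right[OF assms(2)] by simp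

lemma block_araki_lieb_left:
  assumes "density_op (d ^ N) U" "p + q1 + q2 \<le> N"
  shows "vN_entropy (block d N U p q1) \<le> vN_entropy (block d N U p (q1 + q2)) + vN_entropy (block d N U (p + q1) q2)"
  using vN_entropy_araki_lieb_left[OF density_op_block_split[OF assms]] partial_trace_block_left[OF assms(2)] partial_trace_block_right[OF assms(2)] by simp

lemma block_araki_lieb_right:
  assumes "density_op (d ^ N) U" "p + q1 + q2 \<le> N"
  shows "vN_entropy (block d N U (p + q1) q2) \<le> vN_entropy (block d N U p (q1 + q2)) + vN_entropy (block d N U p q1)"
  using vN_entropy_araki_lieb_right[OF density_op_block_split[OF assms]] partial_trace_block_left[OF assms(2)] partial_trace_block_right[OF assms(2)] by simp

lemma marg_eq_block:
  assumes "d > 0" "p + q \<le> N"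
  shows "marg d N {p..<p+q} U = block d N U p q"
  unfolding block_def by (rule marg_interval_eq_partial_trace[OF assms])


section \<open>Entropy of the time-ordered prefixes of a process tensor\<close>

definition S_prefix :: "nat \<Rightarrow> nat \<Rightarrow> complex mat \<Rightarrow> nat \<Rightarrow> real" where
  "S_prefix d n U m = vN_entropy (block d (2*n) U 0 (2*m))"

context
  fixes d n :: nat and U :: "complex mat"
  assumes pt: "process_tensor d n U" and dpos: "d > 0"
begin

lemma density_op_process_tensor: "density_op (d ^ (2*n)) U"
  using pt unfolding process_tensor_def by simp

lemma vN_entropy_marg_block:
  assumes "p + q \<le> 2*n" "S = {p..<p+q}"
  shows "vN_entropy (marg d (2*n) S U) = vN_entropy (block d (2*n) U p q)"
  using marg_eq_block[OF dpos assms(1)] assms(2) by simp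

lemma S_step_block: "1 \<le> j \<Longrightarrow> j \<le> n \<Longrightarrow> S_step d n U j = vN_entropy (block d (2*n) U (2*j-2) 2)"
  unfolding S_step_def by (rule vN_entropy_marg_block) auto

lemma S_out_block: "1 \<le> j \<Longrightarrow> j \<le> n \<Longrightarrow> S_out d n U j = vN_entropy (block d (2*n) U (2*j-1) 1)"
  unfolding S_out_def by (rule vN_entropy_marg_block) auto

lemma S_in_block: "1 \<le> j \<Longrightarrow> j \<le> n \<Longrightarrow> S_in d n U j = vN_entropy (block d (2*n) U (2*j-2) 1)"
  unfolding S_in_def by (rule vN_entropy_marg_block) auto

lemma S_out_le_ln: "1 \<le> j \<Longrightarrow> j \<le> n \<Longrightarrow> S_out d n U j \<le> ln (real d)"
  using S_out_block vN_entropy_le_ln_dim[OF density_op_block[OF density_op_process_tensor, of "2*j-1" 1]]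
  by simp

lemma S_in_le_ln: "1 \<le> j \<Longrightarrow> j \<le> n \<Longrightarrow> S_in d n U j \<le> ln (real d)"
  using S_in_block vN_entropy_le_ln_dim[OF density_op_block[OF density_op_process_tensor, of "2*j-2" 1]]
  by simp

lemma S_prefix_0: "S_prefix d n U 0 = 0"
proof -
  have "block d (2*n) U 0 0 $$ (0,0) = (\<Sum>z<d ^ (2*n). U $$ (z,z))"
    unfolding block_def by (simp add: partial_trace_index)
  also have "\<dots> = 1" using density_op_process_tensor unfolding density_op_def mtrace_def by auto
  finally show ?thesis
    unfolding S_prefix_def by (intro vN_entropy_1x1) (simp_all add: block_def)
qed

lemma S_prefix_n: "S_prefix d n U n = vN_entropy U"
  using density_op_process_tensor partial_trace_1_1[of U "d ^ (2*n)"]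
  unfolding S_prefix_def block_def density_op_def by simp

lemma S_prefix_le_step:
  assumes "1 \<le> j" "j \<le> n"
  shows "S_prefix d n U j \<le> S_prefix d n U (j-1) + S_step d n U j"
proof -
  have "vN_entropy (block d (2*n) U 0 (2*j-2 + 2))
      \<le> vN_entropy (block d (2*n) U 0 (2*j-2)) + vN_entropy (block d (2*n) U (0 + (2*j-2)) 2)"
    by (rule block_subadditive[OF density_op_process_tensor]) (use assms in simp)
  moreover have "2*j-2 + 2 = 2*j" "2*j-2 = 2*(j-1)" using assms by auto
  ultimately show ?thesis unfolding S_prefix_def using S_step_block[OF assms] by simp
qed

lemma S_step_le_S_prefix:
  assumes "1 \<le> k" "k \<le> n"
  shows "S_step d n U k \<le> S_prefix d n U k + S_prefix d n U (k-1)"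
proof -
  have "vN_entropy (block d (2*n) U (0 + (2*k-2)) 2)
      \<le> vN_entropy (block d (2*n) U 0 (2*k-2 + 2)) + vN_entropy (block d (2*n) U 0 (2*k-2))"
    by (rule block_araki_lieb_right[OF density_op_process_tensor]) (use assms in simp)
  moreover have "2*k-2 + 2 = 2*k" "2*k-2 = 2*(k-1)" using assms by auto
  ultimately show ?thesis unfolding S_prefix_def using S_step_block[OF assms] by simp
qed

text \<open>By time ordering, the state of the first \<open>2j - 1\<close> factors is the state of the first \<open>2j - 2\<close>
  factors tensored with the maximally mixed input \<open>i_j-1\<close>.\<close>

lemma vN_entropy_open_prefix:
  assumes j: "1 \<le> j" "j \<le> n"
  shows "vN_entropy (block d (2*n) U 0 (2*j-1)) = S_prefix d n U (j-1) + ln (real d)"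
proof -
  have pw: "d ^ (2*j-1) = d ^ (2*j-2) * d"
  proof -
    have "2*j-1 = Suc (2*j-2)" using j by simp
    then show ?thesis by (simp add: mult.commute)
  qed
  have "vN_entropy (block d (2*n) U 0 (2*j-1)) = vN_entropy (block d (2*n) U 0 (2*j-2)) + ln (real d)"
  proof (rule vN_entropy_tensor_maximally_mixed)
    show "density_op (d ^ (2*j-2)) (block d (2*n) U 0 (2*j-2))"
      using j by (intro density_op_block[OF density_op_process_tensor]) simp
    show "block d (2*n) U 0 (2*j-1) \<in> carrier_mat (d ^ (2*j-2) * d) (d ^ (2*j-2) * d)"
      unfolding block_def pw[symmetric] by simp
    fix a b assume "a < d ^ (2*j-2) * d" "b < d ^ (2*j-2) * d"
    then have ab: "a < d ^ (2*j-1)" "b < d ^ (2*j-1)" using pw by simp_all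
    have "j \<in> {1..n}" using j by simp
    then have "marg d (2*n) {0..<2*j-1} U $$ (a,b) = marg d (2*n) {0..<2*j-2} U $$ (a div d, b div d)
        * (if a mod d = b mod d then 1 / of_nat d else 0)"
      using pt ab unfolding process_tensor_def time_ordered_def by blast
    moreover have "marg d (2*n) {0..<2*j-1} U = block d (2*n) U 0 (2*j-1)"
      using marg_eq_block[OF dpos, of 0 "2*j-1"] j by simp
    moreover have "marg d (2*n) {0..<2*j-2} U = block d (2*n) U 0 (2*j-2)"
      using marg_eq_block[OF dpos, of 0 "2*j-2"] j by simp
    ultimately show "block d (2*n) U 0 (2*j-1) $$ (a,b) = block d (2*n) U 0 (2*j-2) $$ (a div d, b div d)
        * (if a mod d = b mod d then 1 / of_nat d else 0)" by simp
  qed (use dpos in simp)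
  moreover have "2*j-2 = 2*(j-1)" using j by simp
  ultimately show ?thesis unfolding S_prefix_def by simp
qed

lemma S_prefix_ge_step:
  assumes "1 \<le> j" "j \<le> n"
  shows "S_prefix d n U (j-1) + ln (real d) - S_out d n U j \<le> S_prefix d n U j"
proof -
  have "vN_entropy (block d (2*n) U 0 (2*j-1))
      \<le> vN_entropy (block d (2*n) U 0 (2*j-1 + 1)) + vN_entropy (block d (2*n) U (0 + (2*j-1)) 1)"
    by (rule block_araki_lieb_left[OF density_op_process_tensor]) (use assms in simp)
  moreover have "2*j-1 + 1 = 2*j" using assms by auto
  ultimately show ?thesis
    unfolding S_prefix_def using vN_entropy_open_prefix[OF assms] S_out_block[OF assms] by (simp add: S_prefix_def)
qed

lemma S_prefix_le_sum_steps: "m \<le> n \<Longrightarrow> S_prefix d n U m \<le> (\<Sum>j=1..m. S_step d n U j)"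
proof (induction m)
  case 0
  show ?case using S_prefix_0 by simp
next
  case (Suc m)
  then show ?case using S_prefix_le_step[of "Suc m"] by simp
qed

lemma S_prefix_growth:
  assumes "k \<le> m" "m \<le> n"
  shows "S_prefix d n U k + (\<Sum>j\<in>{k<..m}. ln (real d) - S_out d n U j) \<le> S_prefix d n U m"
  using assms
proof (induction m)
  case (Suc m)
  show ?case
  proof (cases "k = Suc m")
    case False
    then have km: "k \<le> m" using Suc.prems by simp
    have "{k<..Suc m} = insert (Suc m) {k<..m}" using km by auto
    then show ?thesis using Suc.IH[OF km] Suc.prems S_prefix_ge_step[of "Suc m"] by simp
  qed simp
qed simp

end

lemma sum_split_at:
  fixes f :: "nat \<Rightarrow> real"
  assumes "1 \<le> k" "k \<le> n"
  shows "(\<Sum>j=1..n. f j) = (\<Sum>j\<in>{1..<k}. f j) + f k + (\<Sum>j\<in>{k<..n}. f j)"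
proof -
  have "{1..n} = {1..<k} \<union> ({k} \<union> {k<..n})" using assms by auto
  then have "(\<Sum>j=1..n. f j) = (\<Sum>j\<in>{1..<k} \<union> ({k} \<union> {k<..n}). f j)" by simp
  also have "\<dots> = (\<Sum>j\<in>{1..<k}. f j) + (\<Sum>j\<in>{k} \<union> {k<..n}. f j)"
    by (rule sum.union_disjoint) auto
  also have "(\<Sum>j\<in>{k} \<union> {k<..n}. f j) = f k + (\<Sum>j\<in>{k<..n}. f j)"
    by (subst sum.union_disjoint) auto
  finally show ?thesis by simp
qed

lemma S_step_le_Mbar:
  assumes "process_tensor d n U" "d > 0" "1 \<le> j" "j \<le> n"
  shows "S_step d n U j \<le> Mbar d n U j"
    and "S_step d n U j + S_out d n U j - ln (real d) \<le> Mbar d n U j"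
  using S_in_le_ln[OF assms] S_out_le_ln[OF assms] unfolding Mbar_def Mcorr_def by simp_all

theorem proposition2:
  fixes d n k :: nat and U :: "complex mat"
  assumes "n \<ge> 1" and "d \<ge> 2"
    and "process_tensor d n U"
    and "1 \<le> k" and "k \<le> n"
  shows "Ncorr d n U \<le> 2 * (\<Sum>j\<in>{1..<k}. Mbar d n U j) + (\<Sum>j\<in>{k<..n}. Mbar d n U j)"
proof -
  have pt: "process_tensor d n U" and dpos: "d > 0" using assms by auto
  let ?S = "S_step d n U" and ?T = "S_prefix d n U" and ?L = "ln (real d)"
  have past: "?T (k-1) \<le> (\<Sum>j\<in>{1..<k}. ?S j)"
    using S_prefix_le_sum_steps[OF pt dpos, of "k-1"] assms by (simp add: atLeastLessThanSuc_atLeastAtMost[symmetric])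
  have future: "?T k + (\<Sum>j\<in>{k<..n}. ?L - S_out d n U j) \<le> ?T n"
    using S_prefix_growth[OF pt dpos] assms by simp
  have "Ncorr d n U = (\<Sum>j\<in>{1..<k}. ?S j) + ?S k + (\<Sum>j\<in>{k<..n}. ?S j) - ?T n"
    unfolding Ncorr_def using sum_split_at[OF assms(4,5)] S_prefix_n[OF pt dpos] by simp
  also have "\<dots> \<le> 2 * (\<Sum>j\<in>{1..<k}. ?S j) + (\<Sum>j\<in>{k<..n}. ?S j + S_out d n U j - ?L)"
    using past future S_step_le_S_prefix[OF pt dpos assms(4,5)]
    by (simp add: sum_subtractf sum.distrib)
  also have "\<dots> \<le> 2 * (\<Sum>j\<in>{1..<k}. Mbar d n U j) + (\<Sum>j\<in>{k<..n}. Mbar d n U j)"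
    using S_step_le_Mbar[OF pt dpos] assms
    by (intro add_mono mult_left_mono sum_mono) auto
  finally show ?thesis .
qed

end
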